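(* Let $d\ge3$ and consider the VRRW on $\mathcal G_d$. For $\varepsilon>0$ and $t\ge t_0$ let $$A_\varepsilon(t)=\Big\{\min_{i=1,\dots,d}\frac{Z(t,i)}{t}\ge\varepsilon\ \text{ and }\ \max_{i=1,\dots,d}\frac{\sum_{j=1}^{r_i}Z(t,\ell^i_j)}{t}\le t^{-\varepsilon}\Big\},\qquad C_\varepsilon=\Big\{\exists T:\ A_\varepsilon(t)\text{ occurs for all }t\ge T\Big\}.$$ Then $C_\varepsilon\subseteq\{\pi_\infty=\pi_{\mathsf{unif}}\}$ almost surely.
   Context: Let $d\ge 2$ and $r_1,\dots,r_d\ge 0$ be integers. The complete-like graph $\mathcal G_d$ has vertex set $V_d=\{1,\dots,d\}\cup\{\ell^i_r: 1\le i\le d,\ 1\le r\le r_i\}$. The vertices $1,\dots,d$ are called interior, and every pair of distinct interior vertices is joined by an edge; for each $i$, the vertices $\ell^i_1,\dots,\ell^i_{r_i}$ are the leaves attached to $i$, each joined by an edge to $i$ only; there are no other edges. Write $v\sim w$ if $v,w$ are joined by an edge. Vertex-reinforced random walk (VRRW) on $\mathcal G_d$: fix positive integers $z(0,v)$, $v\in V_d$, put $t_0=\sum_{v\in V_d}z(0,v)$, let $X(t_0)\in V_d$ be a given starting vertex, and for $t\ge t_0$ let $Z(t,v)=z(0,v)+\#\{s\in\{t_0+1,\dots,t\}: X(s)=v\}$ (so $\sum_v Z(t,v)=t$). Let $\mathcal F_t=\sigma(X(s),t_0\le s\le t)$. The transitions are $\mathbb P(X(t+1)=w\mid\mathcal F_t)=Z(t,w)/\sum_{y\sim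 X(t)}Z(t,y)$ for $w\sim X(t)$. Let $\pi(t)=(Z(t,v)/t)_{v\in V_d}\in\mathbb R^{|V_d|}$ be the empirical occupation measure, let $\pi_\infty=\lim_{t\to\infty}\pi(t)$ on the event that this limit exists and $\pi_\infty=0$ (zero vector) otherwise, and let $\pi_{\mathsf{unif}}\in\mathbb R^{|V_d|}$ be the vector with coordinate $1/d$ at each interior vertex and $0$ at each leaf. *)

theory Defs
  imports "HOL-Probability.Probability"
begin

text \<open>Vertices of the complete-like graph: Inl i is the interior vertex i (1 <= i <= d),
  Inr (i,k) is the leaf l^i_k (1 <= k <= r i).\<close>
type_synonym vtx = "nat + nat \<times> nat"

definition Vd :: "nat \<Rightarrow> (nat \<Rightarrow> nat) \<Rightarrow> vtx set" where
  "Vd d r = Inl ` {1..d} \<union> {Inr (i, k) | i k. i \<in> {1..d} \<and> k \<in> {1..r i}}"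

definition adj :: "nat \<Rightarrow> (nat \<Rightarrow> nat) \<Rightarrow> vtx \<Rightarrow> vtx \<Rightarrow> bool" where
  "adj d r v w = (case (v, w) of
      (Inl i, Inl j) \<Rightarrow> i \<in> {1..d} \<and> j \<in> {1..d} \<and> i \<noteq> j
    | (Inl i, Inr (j, k)) \<Rightarrow> i = j \<and> i \<in> {1..d} \<and> k \<in> {1..r i}
    | (Inr (j, k), Inl i) \<Rightarrow> i = j \<and> i \<in> {1..d} \<and> k \<in> {1..r i}
    | _ \<Rightarrow> False)"

definition tzero :: "nat \<Rightarrow> (nat \<Rightarrow> nat) \<Rightarrow> (vtx \<Rightarrow> nat) \<Rightarrow> nat" where
  "tzero d r z0 = (\<Sum>v\<in>Vd d r. z0 v)"

text \<open>Z(t,v) along a path h (times t0+1..t counted)\<close>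
definition Zp :: "nat \<Rightarrow> (nat \<Rightarrow> nat) \<Rightarrow> (vtx \<Rightarrow> nat) \<Rightarrow> (nat \<Rightarrow> vtx) \<Rightarrow> nat \<Rightarrow> vtx \<Rightarrow> nat" where
  "Zp d r z0 h t v = z0 v + card {s \<in> {tzero d r z0<..t}. h s = v}"

definition trans_prob :: "nat \<Rightarrow> (nat \<Rightarrow> nat) \<Rightarrow> (vtx \<Rightarrow> nat) \<Rightarrow> (nat \<Rightarrow> vtx) \<Rightarrow> nat \<Rightarrow> vtx \<Rightarrow> real" where
  "trans_prob d r z0 h t w =
     (if adj d r (h t) w
      then real (Zp d r z0 h t w) / (\<Sum>y\<in>{y \<in> Vd d r. adj d r (h t) y}. real (Zp d r z0 h t y))
      else 0)"

text \<open>X is a VRRW on G_d (in M) started at x0 at time t0: the conditional law of X(t+1)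
  given the history F_t, expressed on the atoms of F_t (finitely many histories).\<close>
definition is_vrrw :: "'a measure \<Rightarrow> (nat \<Rightarrow> 'a \<Rightarrow> vtx) \<Rightarrow> nat \<Rightarrow> (nat \<Rightarrow> nat) \<Rightarrow> (vtx \<Rightarrow> nat) \<Rightarrow> vtx \<Rightarrow> bool" where
  "is_vrrw M X d r z0 x0 \<longleftrightarrow>
     prob_space M \<and>
     (\<forall>s. X s \<in> measurable M (count_space UNIV)) \<and>
     (AE \<omega> in M. X (tzero d r z0) \<omega> = x0) \<and>
     (\<forall>t \<ge> tzero d r z0. \<forall>h w.
        measure M {\<omega> \<in> space M. (\<forall>s\<in>{tzero d r z0..t}. X s \<omega> = h s) \<and> X (Suc t) \<omega> = w}
        = trans_prob d r z0 h t w * measure M {\<omega> \<in> space M. \<forall>s\<in>{tzero d r z0..t}. X s \<omega> = h s})"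

definition Z :: "nat \<Rightarrow> (nat \<Rightarrow> nat) \<Rightarrow> (vtx \<Rightarrow> nat) \<Rightarrow> (nat \<Rightarrow> 'a \<Rightarrow> vtx) \<Rightarrow> nat \<Rightarrow> 'a \<Rightarrow> vtx \<Rightarrow> real" where
  "Z d r z0 X t \<omega> v = real (Zp d r z0 (\<lambda>s. X s \<omega>) t v)"

definition pi_t :: "nat \<Rightarrow> (nat \<Rightarrow> nat) \<Rightarrow> (vtx \<Rightarrow> nat) \<Rightarrow> (nat \<Rightarrow> 'a \<Rightarrow> vtx) \<Rightarrow> nat \<Rightarrow> 'a \<Rightarrow> vtx \<Rightarrow> real" where
  "pi_t d r z0 X t \<omega> v = Z d r z0 X t \<omega> v / real t"

text \<open>pi_infty: the limit if it exists (all coordinates on V_d converge), else the zero vector\<close>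
definition pi_inf :: "nat \<Rightarrow> (nat \<Rightarrow> nat) \<Rightarrow> (vtx \<Rightarrow> nat) \<Rightarrow> (nat \<Rightarrow> 'a \<Rightarrow> vtx) \<Rightarrow> 'a \<Rightarrow> vtx \<Rightarrow> real" where
  "pi_inf d r z0 X \<omega> =
     (if \<forall>v\<in>Vd d r. convergent (\<lambda>t. pi_t d r z0 X t \<omega> v)
      then (\<lambda>v. lim (\<lambda>t. pi_t d r z0 X t \<omega> v)) else (\<lambda>v. 0))"

definition pi_unif :: "nat \<Rightarrow> vtx \<Rightarrow> real" where
  "pi_unif d v = (case v of Inl i \<Rightarrow> 1 / real d | Inr _ \<Rightarrow> 0)"

definition A_eps :: "nat \<Rightarrow> (nat \<Rightarrow> nat) \<Rightarrow> (vtx \<Rightarrow> nat) \<Rightarrow> (nat \<Rightarrow> 'a \<Rightarrow> vtx) \<Rightarrow> real \<Rightarrow> nat \<Rightarrow> 'a \<Rightarrow> bool" where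
  "A_eps d r z0 X \<epsilon> t \<omega> \<longleftrightarrow>
     Min ((\<lambda>i. Z d r z0 X t \<omega> (Inl i) / real t) ` {1..d}) \<ge> \<epsilon> \<and>
     Max ((\<lambda>i. (\<Sum>j\<in>{1..r i}. Z d r z0 X t \<omega> (Inr (i, j))) / real t) ` {1..d}) \<le> real t powr (- \<epsilon>)"

definition C_eps :: "nat \<Rightarrow> (nat \<Rightarrow> nat) \<Rightarrow> (vtx \<Rightarrow> nat) \<Rightarrow> (nat \<Rightarrow> 'a \<Rightarrow> vtx) \<Rightarrow> real \<Rightarrow> 'a \<Rightarrow> bool" where
  "C_eps d r z0 X \<epsilon> \<omega> \<longleftrightarrow> (\<exists>T \<ge> tzero d r z0. \<forall>t \<ge> T. A_eps d r z0 X \<epsilon> t \<omega>)"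

end

theory Submission
  imports Defs "HOL-Library.Discrete_Functions"
begin

text \<open>
  Fix a path of the walk and write \<open>N\<^sub>j(t) = Z(t,j)\<close> for the occupation of the
  interior vertex \<open>j\<close> and \<open>L(t)\<close> for the total occupation of the leaves.

  The compensated visit count of \<open>j\<close> (visits to \<open>j\<close> minus their conditional
  probabilities) is a martingale with increments bounded by one. Computing with the finitely many
  histories of length \<open>t\<close> gives a second moment at most \<open>t\<close>; Chebyshev along the squares
  \<open>t = k\<^sup>2\<close> and Borel--Cantelli give almost sure convergence of the count divided by \<open>t\<close> to zero.

  On \<open>C\<^sub>\<epsilon>\<close> we have \<open>N\<^sub>j(t) \<ge> \<epsilon> t\<close> and \<open>L(t) \<le> d t\<^sup>1\<^sup>-\<^sup>\<epsilon>\<close>, and from an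
  interior vertex \<open>i\<close> the walk jumps to \<open>j\<close> with probability \<open>N\<^sub>j / (t - N\<^sub>i)\<close> up to
  \<open>O(L / \<epsilon> t)\<close>. Over a block \<open>[a, a + \<delta> a)\<close> the interior frequencies therefore follow a
  reinforcement rule up to small errors, and an algebraic contraction lemma shows that their
  spread (maximum minus minimum) shrinks by the factor \<open>1 - \<delta>\<epsilon>/4\<close>. Iterating over consecutive
  blocks, the spread tends to zero, so \<open>N\<^sub>j(t)/t \<rightarrow> 1/d\<close> and \<open>L(t)/t \<rightarrow> 0\<close>.

  Everything works for \<open>d \<ge> 2\<close>.
\<close>

definition leaves :: "nat \<Rightarrow> (nat \<Rightarrow> nat) \<Rightarrow> vtx set" where
  "leaves d r = {Inr (i, k) | i k. i \<in> {1..d} \<and> k \<in> {1..r i}}"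

lemma leaves_eq_image: "leaves d r = (\<lambda>(i,k). Inr (i,k)) ` (SIGMA i:{1..d}. {1..r i})"
  unfolding leaves_def by auto

lemma finite_leaves: "finite (leaves d r)" unfolding leaves_eq_image by simp

lemma Vd_split: "Vd d r = Inl ` {1..d} \<union> leaves d r" unfolding Vd_def leaves_def by simp

lemma finite_Vd: "finite (Vd d r)"
  unfolding Vd_split using finite_leaves by simp

lemma adj_in_Vd: "adj d r v w \<Longrightarrow> w \<in> Vd d r"
  by (cases v; cases w) (auto simp: adj_def Vd_def split: prod.splits)

lemma trans_prob_nonneg: "trans_prob d r z0 h t w \<ge> 0"
  unfolding trans_prob_def by (auto intro!: divide_nonneg_nonneg sum_nonneg)

lemma trans_prob_eq_0: "\<not> adj d r (h t) w \<Longrightarrow> trans_prob d r z0 h t w = 0"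
  unfolding trans_prob_def by auto

lemma trans_prob_le_1: "trans_prob d r z0 h t w \<le> 1"
proof (cases "adj d r (h t) w")
  case True
  let ?S = "{y \<in> Vd d r. adj d r (h t) y}"
  have "w \<in> ?S" using True adj_in_Vd by blast
  then have "real (Zp d r z0 h t w) \<le> (\<Sum>y\<in>?S. real (Zp d r z0 h t y))"
    by (intro member_le_sum) (auto simp: finite_Vd)
  then show ?thesis using True unfolding trans_prob_def
    by (auto simp: divide_le_eq_1)
qed (simp add: trans_prob_eq_0)

lemma exists_neighbour: assumes "d \<ge> 2" "v \<in> Vd d r" shows "\<exists>w. adj d r v w"
proof -
  from assms(2) consider (interior) i where "v = Inl i" "i \<in> {1..d}"
    | (leaf) i k where "v = Inr (i,k)" "i \<in> {1..d}" "k \<in> {1..r i}"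
    unfolding Vd_def by auto
  then show ?thesis
  proof cases
    case interior
    then show ?thesis using assms(1)
      by (intro exI[of _ "Inl (if i = 1 then 2 else 1)"]) (auto simp: adj_def)
  next
    case leaf
    then show ?thesis by (intro exI[of _ "Inl i"]) (auto simp: adj_def)
  qed
qed

lemma trans_prob_sum_1:
  assumes "d \<ge> 2" "h t \<in> Vd d r" "\<forall>v\<in>Vd d r. z0 v > 0"
  shows "(\<Sum>w\<in>Vd d r. trans_prob d r z0 h t w) = 1"
proof -
  let ?S = "{y \<in> Vd d r. adj d r (h t) y}"
  let ?D = "(\<Sum>y\<in>?S. real (Zp d r z0 h t y))"
  obtain w where "adj d r (h t) w" using exists_neighbour assms by blast
  then have wS: "w \<in> ?S" using adj_in_Vd by blast
  have "0 < real (Zp d r z0 h t w)" using assms(3) wS unfolding Zp_def by (simp add: add_pos_nonneg)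
  also have "\<dots> \<le> ?D" using wS by (intro member_le_sum) (simp_all add: finite_Vd)
  finally have D_pos: "?D > 0" .
  have "(\<Sum>w\<in>Vd d r. trans_prob d r z0 h t w) = (\<Sum>w\<in>?S. trans_prob d r z0 h t w)"
    by (rule sum.mono_neutral_right) (simp_all add: finite_Vd trans_prob_eq_0)
  also have "\<dots> = (\<Sum>w\<in>?S. real (Zp d r z0 h t w) / ?D)"
    by (intro sum.cong refl) (simp add: trans_prob_def)
  also have "\<dots> = ?D / ?D" by (rule sum_divide_distrib[symmetric])
  finally show ?thesis using D_pos by simp
qed

lemma Zp_cong: "(\<forall>u\<in>{tzero d r z0..t}. g u = h u) \<Longrightarrow> Zp d r z0 g t = Zp d r z0 h t"
  unfolding Zp_def by (intro ext arg_cong[where f="\<lambda>A. _ + card A"]) auto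

lemma trans_prob_cong:
  "tzero d r z0 \<le> t \<Longrightarrow> (\<forall>u\<in>{tzero d r z0..t}. g u = h u) \<Longrightarrow> trans_prob d r z0 g t = trans_prob d r z0 h t"
  using Zp_cong[of d r z0 t g h] unfolding trans_prob_def by auto

lemma tzero_ge_1:
  assumes "d \<ge> 1" "\<forall>v\<in>Vd d r. z0 v > 0"
  shows "tzero d r z0 \<ge> 1"
proof -
  have V: "Inl 1 \<in> Vd d r" using assms(1) unfolding Vd_def by auto
  then have "z0 (Inl 1) \<le> tzero d r z0" unfolding tzero_def by (intro member_le_sum) (auto simp: finite_Vd)
  moreover have "z0 (Inl 1) > 0" using assms(2) V by auto
  ultimately show ?thesis by simp
qed

lemma sum_Vd: "(\<Sum>v\<in>Vd d r. f v) = (\<Sum>i\<in>{1..d}. f (Inl i)) + (\<Sum>v\<in>leaves d r. f v)"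
proof -
  have "(\<Sum>v\<in>Vd d r. f v) = (\<Sum>v\<in>Inl ` {1..d}. f v) + (\<Sum>v\<in>leaves d r. f v)"
    unfolding Vd_split by (rule sum.union_disjoint) (use finite_leaves in \<open>auto simp: leaves_def\<close>)
  also have "(\<Sum>v\<in>Inl ` {1..d}. f v) = (\<Sum>i\<in>{1..d}. f (Inl i))" by (subst sum.reindex) (auto simp: inj_on_def)
  finally show ?thesis .
qed

lemma sum_leaves: "(\<Sum>v\<in>leaves d r. f v) = (\<Sum>i\<in>{1..d}. \<Sum>k\<in>{1..r i}. f (Inr (i,k)))"
proof -
  have inj: "inj_on (\<lambda>(i,k). Inr (i,k) :: vtx) (SIGMA i:{1..d}. {1..r i})" by (auto simp: inj_on_def)
  have "(\<Sum>v\<in>leaves d r. f v) = (\<Sum>(i,k)\<in>(SIGMA i:{1..d}. {1..r i}). f (Inr (i,k)))"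
    unfolding leaves_eq_image by (subst sum.reindex[OF inj]) (simp add: case_prod_unfold)
  also have "\<dots> = (\<Sum>i\<in>{1..d}. \<Sum>k\<in>{1..r i}. f (Inr (i,k)))" by (rule sum.Sigma[symmetric]) auto
  finally show ?thesis .
qed

lemma abs_diff_le_of_unit_steps:
  fixes F :: "nat \<Rightarrow> real"
  assumes step: "\<And>t. t \<ge> c \<Longrightarrow> \<bar>F (Suc t) - F t\<bar> \<le> 1"
    and cs: "c \<le> s" and st: "s \<le> t"
  shows "\<bar>F t - F s\<bar> \<le> real t - real s"
  using st
proof (induction t rule: dec_induct)
  case base then show ?case by simp
next
  case (step t)
  have "\<bar>F (Suc t) - F s\<bar> \<le> \<bar>F (Suc t) - F t\<bar> + \<bar>F t - F s\<bar>" by linarith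
  also have "\<dots> \<le> 1 + (real t - real s)" using assms(1)[of t] step cs by linarith
  finally show ?case by simp
qed

text \<open>Every \<open>t\<close> lies within \<open>2 m\<close> of the square \<open>m\<^sup>2\<close>, \<open>m = \<lfloor>\<surd>t\<rfloor>\<close>; so a sequence with unit
  increments differs from its value at that square by at most \<open>2 m\<close>.\<close>
lemma abs_le_at_floor_sqrt:
  fixes F :: "nat \<Rightarrow> real"
  assumes step: "\<And>t. t \<ge> c \<Longrightarrow> \<bar>F (Suc t) - F t\<bar> \<le> 1" and c: "c \<le> (floor_sqrt t)^2"
  shows "\<bar>F t\<bar> \<le> \<bar>F ((floor_sqrt t)^2)\<bar> + 2 * real (floor_sqrt t)"
proof -
  define m where "m = floor_sqrt t"
  have "m^2 \<le> t" "t < (Suc m)^2" unfolding m_def by (simp, rule Suc_floor_sqrt_power2_gt)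
  then have "t \<le> m^2 + 2 * m" by (simp add: power2_eq_square)
  then have "real t - real (m^2) \<le> 2 * real m" by linarith
  moreover have "\<bar>F t - F (m^2)\<bar> \<le> real t - real (m^2)"
    by (rule abs_diff_le_of_unit_steps[where F=F]) (use step c \<open>m^2 \<le> t\<close> in \<open>auto simp: m_def\<close>)
  ultimately show ?thesis unfolding m_def by linarith
qed

text \<open>Subsequence trick for the strong law: if \<open>F\<close> has increments bounded by one and
  \<open>F(m\<^sup>2) = o(m\<^sup>2)\<close> along the squares \<open>m = k + c\<close>, then \<open>F(t) = o(t)\<close>.\<close>
lemma tendsto_zero_from_squares:
  fixes F :: "nat \<Rightarrow> real" and c :: nat
  assumes step: "\<And>t. t \<ge> c \<Longrightarrow> \<bar>F (Suc t) - F t\<bar> \<le> 1"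
    and ev: "\<And>n::nat. eventually (\<lambda>k. \<bar>F ((k+c)^2)\<bar> < (1/(real n+1)) * real ((k+c)^2)) sequentially"
  shows "(\<lambda>t. F t / real t) \<longlonglongrightarrow> 0"
proof (rule LIMSEQ_I)
  fix e :: real assume e: "e > 0"
  obtain n :: nat where "2/e < real n" using reals_Archimedean2 by blast
  then have n: "1/(real n+1) < e/2" using e by (simp add: field_simps)
  obtain K where K: "\<And>k. k \<ge> K \<Longrightarrow> \<bar>F ((k+c)^2)\<bar> < (1/(real n+1)) * real ((k+c)^2)"
    using ev[of n] unfolding eventually_sequentially by blast
  obtain p :: nat where "4/e < real p" using reals_Archimedean2 by blast
  define m0 where "m0 = p + K + c + 1"
  have "4/e < real m0" using \<open>4/e < real p\<close> unfolding m0_def by simp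
  then have m0: "2 / real m0 < e/2" "m0 \<ge> K + c + 1" using e unfolding m0_def by (simp_all add: field_simps)
  show "\<exists>N. \<forall>t\<ge>N. norm (F t / real t - 0) < e"
  proof (intro exI allI impI)
    fix t assume t: "t \<ge> m0^2"
    define m where "m = floor_sqrt t"
    have m_ge: "m \<ge> m0" unfolding m_def using t by (intro le_floor_sqrtI) simp
    have m_sq: "m^2 \<le> t" unfolding m_def by simp
    then have m_sq_real: "real m * real m \<le> real t"
      by (simp add: power2_eq_square of_nat_mult[symmetric] del: of_nat_mult)
    have m_pos: "real m \<ge> 1" using m_ge m0(2) by simp
    have "c \<le> m" "m \<le> m^2" using m_ge m0(2) le_square[of m] by (simp_all add: power2_eq_square)
    then have c_le: "c \<le> m^2" by linarith
    have "\<bar>F (m^2)\<bar> < (1/(real n+1)) * real (m^2)"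
      using K[of "m - c"] m_ge m0(2) by simp
    also have "\<dots> \<le> (e/2) * real t" using n m_sq e by (intro mult_mono) auto
    finally have sq: "\<bar>F (m^2)\<bar> < (e/2) * real t" .
    have "2 * real m = (2 / real m) * (real m * real m)" using m_pos by simp
    also have "\<dots> \<le> (2 / real m0) * real t"
      using m_sq_real m_pos m_ge m0(2) by (intro mult_mono divide_left_mono) auto
    also have "\<dots> \<le> (e/2) * real t" using m0(1) by (intro mult_right_mono) auto
    finally have "\<bar>F t\<bar> < e * real t"
      using abs_le_at_floor_sqrt[where F=F, OF step c_le[unfolded m_def]] sq unfolding m_def by linarith
    moreover have "real t > 0" using mult_mono[OF m_pos m_pos] m_sq_real by linarith
    ultimately show "norm (F t / real t - 0) < e" by (simp add: abs_divide divide_less_eq)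
  qed
qed

locale vrrw =
  fixes M :: "'a measure" and X :: "nat \<Rightarrow> 'a \<Rightarrow> vtx" and d :: nat and r :: "nat \<Rightarrow> nat"
    and z0 :: "vtx \<Rightarrow> nat" and x0 :: vtx
  assumes d2: "d \<ge> 2" and z0pos: "\<forall>v\<in>Vd d r. z0 v > 0" and x0V: "x0 \<in> Vd d r"
    and vr: "is_vrrw M X d r z0 x0"
begin

abbreviation "T0 \<equiv> tzero d r z0"
abbreviation "V \<equiv> Vd d r"
abbreviation "tp \<equiv> trans_prob d r z0"

lemma T0_ge_1: "T0 \<ge> 1" using tzero_ge_1 d2 z0pos by simp

lemma prob_space_M: "prob_space M" using vr unfolding is_vrrw_def by auto

sublocale prob_space M by (rule prob_space_M)

lemma X_measurable[measurable]: "X s \<in> measurable M (count_space UNIV)"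
  using vr unfolding is_vrrw_def by auto

lemma AE_start: "AE \<omega> in M. X T0 \<omega> = x0"
  using vr unfolding is_vrrw_def by auto

lemma step_prob: "t \<ge> T0 \<Longrightarrow> measure M {\<omega>\<in>space M. (\<forall>s\<in>{T0..t}. X s \<omega> = h s) \<and> X (Suc t) \<omega> = w}
   = tp h t w * measure M {\<omega>\<in>space M. \<forall>s\<in>{T0..t}. X s \<omega> = h s}"
  using vr unfolding is_vrrw_def by blast

text \<open>All probabilistic estimates below
  are finite sums over histories.\<close>
definition histories :: "nat \<Rightarrow> (nat \<Rightarrow> vtx) set" where "histories t = PiE {T0..t} (\<lambda>_. V)"
definition cylinder :: "nat \<Rightarrow> (nat \<Rightarrow> vtx) \<Rightarrow> 'a set" where "cylinder t h = {\<omega>\<in>space M. \<forall>s\<in>{T0..t}. X s \<omega> = h s}"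
definition hist_prob :: "nat \<Rightarrow> (nat \<Rightarrow> vtx) \<Rightarrow> real" where "hist_prob t h = measure M (cylinder t h)"

lemma X_eq_sets: "{\<omega>\<in>space M. X s \<omega> = c} \<in> sets M"
proof -
  have "{\<omega>\<in>space M. X s \<omega> = c} = X s -` {c} \<inter> space M" by auto
  then show ?thesis using measurable_sets[OF X_measurable, of "{c}" s] by simp
qed

lemma cylinder_sets[measurable]: "cylinder t h \<in> sets M"
proof -
  have "cylinder t h = space M \<inter> (\<Inter>s\<in>{T0..t}. {\<omega>\<in>space M. X s \<omega> = h s})"
    unfolding cylinder_def by auto
  also have "\<dots> \<in> sets M"
  proof (cases "{T0..t} = {}")
    case True then show ?thesis by simp
  next
    case False
    then show ?thesis using X_eq_sets by (intro sets.Int sets.top sets.finite_INT) auto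
  qed
  finally show ?thesis .
qed

lemma finite_histories: "finite (histories t)"
  unfolding histories_def by (intro finite_PiE) (auto simp: finite_Vd)

lemma hist_prob_nonneg: "hist_prob t h \<ge> 0" unfolding hist_prob_def by simp

lemma cylinder_Suc: assumes "t \<ge> T0"
  shows "cylinder (Suc t) (h(Suc t := w)) = {\<omega>\<in>space M. (\<forall>s\<in>{T0..t}. X s \<omega> = h s) \<and> X (Suc t) \<omega> = w}"
proof -
  have e: "{T0..Suc t} = insert (Suc t) {T0..t}" using assms by auto
  show ?thesis unfolding cylinder_def e by auto
qed

lemma hist_prob_Suc: "t \<ge> T0 \<Longrightarrow> hist_prob (Suc t) (h(Suc t := w)) = tp h t w * hist_prob t h"
  unfolding hist_prob_def using cylinder_Suc step_prob by (simp add: cylinder_def)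

lemma histories_Suc: assumes "t \<ge> T0"
  shows "histories (Suc t) = (\<lambda>(y, g). g(Suc t := y)) ` (V \<times> histories t)"
proof -
  have e: "{T0..Suc t} = insert (Suc t) {T0..t}" using assms by auto
  show ?thesis unfolding histories_def e PiE_insert_eq by simp
qed

lemma sum_histories_Suc: assumes "t \<ge> T0"
  shows "(\<Sum>g\<in>histories (Suc t). F g) = (\<Sum>h\<in>histories t. \<Sum>w\<in>V. F (h(Suc t := w)))"
proof -
  have inj: "inj_on (\<lambda>(y, g). g(Suc t := y)) (V \<times> histories t)"
    unfolding histories_def by (rule inj_combinator) simp
  have "(\<Sum>g\<in>histories (Suc t). F g) = (\<Sum>(w,h)\<in>V \<times> histories t. F (h(Suc t := w)))"
    unfolding histories_Suc[OF assms] by (subst sum.reindex[OF inj]) (simp add: case_prod_unfold)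
  also have "\<dots> = (\<Sum>w\<in>V. \<Sum>h\<in>histories t. F (h(Suc t := w)))"
    by (rule sum.cartesian_product[symmetric])
  also have "\<dots> = (\<Sum>h\<in>histories t. \<Sum>w\<in>V. F (h(Suc t := w)))"
    by (rule sum.swap)
  finally show ?thesis .
qed

lemma histories_start: "histories T0 = (\<lambda>w. (\<lambda>_. undefined)(T0 := w)) ` V"
proof -
  have e: "{T0..T0} = insert T0 {}" by auto
  show ?thesis unfolding histories_def e PiE_insert_eq by auto
qed

lemma histories_in_Vd: "h \<in> histories t \<Longrightarrow> s \<in> {T0..t} \<Longrightarrow> h s \<in> V"
  unfolding histories_def by auto

lemma sum_hist_prob: "t \<ge> T0 \<Longrightarrow> (\<Sum>h\<in>histories t. hist_prob t h) = 1"
proof (induction t rule: dec_induct)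
  case base
  have inj: "inj_on (\<lambda>w. (\<lambda>_. undefined)(T0 := w)) V"
    by (intro inj_onI) (metis fun_upd_same)
  have start_sets: "{\<omega>\<in>space M. X T0 \<omega> \<in> V} \<in> sets M"
    using measurable_sets[OF X_measurable, of V T0] by (simp add: Int_def conj_commute vimage_def)
  have "(\<Sum>h\<in>histories T0. hist_prob T0 h) = (\<Sum>w\<in>V. measure M {\<omega>\<in>space M. X T0 \<omega> = w})"
    unfolding histories_start by (subst sum.reindex[OF inj]) (simp add: hist_prob_def cylinder_def)
  also have "\<dots> = measure M (\<Union>w\<in>V. {\<omega>\<in>space M. X T0 \<omega> = w})"
    by (rule measure_finite_Union[symmetric]) (auto simp: finite_Vd X_eq_sets disjoint_family_on_def)
  also have "(\<Union>w\<in>V. {\<omega>\<in>space M. X T0 \<omega> = w}) = {\<omega>\<in>space M. X T0 \<omega> \<in> V}" by auto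
  also have "measure M {\<omega>\<in>space M. X T0 \<omega> \<in> V} = 1"
    using prob_Collect_eq_1[OF start_sets] AE_start x0V by auto
  finally show ?case .
next
  case (step t)
  have "(\<Sum>g\<in>histories (Suc t). hist_prob (Suc t) g) = (\<Sum>h\<in>histories t. \<Sum>w\<in>V. tp h t w * hist_prob t h)"
    using step(1) by (simp add: sum_histories_Suc hist_prob_Suc)
  also have "\<dots> = (\<Sum>h\<in>histories t. hist_prob t h)"
  proof (intro sum.cong refl)
    fix h assume h: "h \<in> histories t"
    have "h t \<in> V" using histories_in_Vd[OF h] step(1) by auto
    then have "(\<Sum>w\<in>V. tp h t w) = 1" by (rule trans_prob_sum_1[OF d2 _ z0pos])
    then show "(\<Sum>w\<in>V. tp h t w * hist_prob t h) = hist_prob t h" by (simp add: sum_distrib_right[symmetric])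
  qed
  finally show ?case using step(3) by simp
qed

lemma cylinders_disjoint: assumes "h \<in> histories t" "g \<in> histories t" "h \<noteq> g" shows "cylinder t h \<inter> cylinder t g = {}"
proof -
  obtain s where s: "h s \<noteq> g s" using assms(3) by auto
  have "s \<in> {T0..t}"
  proof (rule ccontr)
    assume "s \<notin> {T0..t}"
    then have "h s = undefined" "g s = undefined" using assms(1,2) unfolding histories_def by (auto simp: PiE_def extensional_def)
    then show False using s by simp
  qed
  then show ?thesis using s unfolding cylinder_def by auto
qed

lemma Union_cylinders: "(\<Union>h\<in>histories t. cylinder t h) = {\<omega>\<in>space M. \<forall>s\<in>{T0..t}. X s \<omega> \<in> V}"
proof
  show "(\<Union>h\<in>histories t. cylinder t h) \<subseteq> {\<omega>\<in>space M. \<forall>s\<in>{T0..t}. X s \<omega> \<in> V}"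
  proof
    fix \<omega> assume "\<omega> \<in> (\<Union>h\<in>histories t. cylinder t h)"
    then obtain h where h: "h \<in> histories t" "\<omega> \<in> cylinder t h" by blast
    then show "\<omega> \<in> {\<omega>\<in>space M. \<forall>s\<in>{T0..t}. X s \<omega> \<in> V}"
      unfolding cylinder_def using histories_in_Vd[OF h(1)] by auto
  qed
  show "{\<omega>\<in>space M. \<forall>s\<in>{T0..t}. X s \<omega> \<in> V} \<subseteq> (\<Union>h\<in>histories t. cylinder t h)"
  proof
    fix \<omega> assume w: "\<omega> \<in> {\<omega>\<in>space M. \<forall>s\<in>{T0..t}. X s \<omega> \<in> V}"
    let ?h = "restrict (\<lambda>s. X s \<omega>) {T0..t}"
    have "?h \<in> histories t" using w unfolding histories_def by auto
    moreover have "\<omega> \<in> cylinder t ?h" using w unfolding cylinder_def by auto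
    ultimately show "\<omega> \<in> (\<Union>h\<in>histories t. cylinder t h)" by blast
  qed
qed

lemma measure_Union_cylinders: assumes "t \<ge> T0" shows "measure M (\<Union>h\<in>histories t. cylinder t h) = 1"
proof -
  have "measure M (\<Union>h\<in>histories t. cylinder t h) = (\<Sum>h\<in>histories t. hist_prob t h)"
    unfolding hist_prob_def using cylinders_disjoint
    by (intro measure_finite_Union) (auto simp: finite_histories disjoint_family_on_def)
  then show ?thesis using sum_hist_prob[OF assms] by simp
qed

lemma Union_cylinders_sets: "(\<Union>h\<in>histories t. cylinder t h) \<in> sets M"
  by (rule sets.finite_UN[OF finite_histories]) (rule cylinder_sets)

lemma AE_path_in_Vd: "AE \<omega> in M. \<forall>s\<ge>T0. X s \<omega> \<in> V"
proof -
  have "AE \<omega> in M. \<forall>s\<in>{T0..t}. X s \<omega> \<in> V" for t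
  proof (cases "t \<ge> T0")
    case True
    have S: "{\<omega>\<in>space M. \<forall>s\<in>{T0..t}. X s \<omega> \<in> V} \<in> sets M"
      using Union_cylinders_sets[of t] Union_cylinders[of t] by simp
    have "prob {\<omega>\<in>space M. \<forall>s\<in>{T0..t}. X s \<omega> \<in> V} = 1"
      using measure_Union_cylinders[OF True] Union_cylinders[of t] by simp
    then show ?thesis using prob_Collect_eq_1[OF S] by simp
  next
    case False then show ?thesis by simp
  qed
  then have "AE \<omega> in M. \<forall>t. \<forall>s\<in>{T0..t}. X s \<omega> \<in> V" by (simp add: AE_all_countable)
  then show ?thesis
  proof (rule eventually_mono)
    fix \<omega> assume a: "\<forall>t. \<forall>s\<in>{T0..t}. X s \<omega> \<in> V"
    show "\<forall>s\<ge>T0. X s \<omega> \<in> V"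
    proof (intro allI impI)
      fix s assume "T0 \<le> s" then show "X s \<omega> \<in> V" using a[rule_format, of s s] by simp
    qed
  qed
qed

text \<open>Along the walk it is a martingale.\<close>
definition comp_visits :: "nat \<Rightarrow> nat \<Rightarrow> (nat \<Rightarrow> vtx) \<Rightarrow> real" where
  "comp_visits j t h = (\<Sum>s\<in>{T0..<t}. ((if h (Suc s) = Inl j then 1 else 0) - tp h s (Inl j)))"

lemma comp_visits_cong: "(\<forall>u\<in>{T0..t}. g u = h u) \<Longrightarrow> comp_visits j t g = comp_visits j t h"
  unfolding comp_visits_def
proof (intro sum.cong refl)
  fix s assume a: "\<forall>u\<in>{T0..t}. g u = h u" and s: "s \<in> {T0..<t}"
  have "g (Suc s) = h (Suc s)" using a s by auto
  moreover have "tp g s = tp h s" using s a by (intro trans_prob_cong) auto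
  ultimately show "(if g (Suc s) = Inl j then 1 else 0) - tp g s (Inl j) =
         (if h (Suc s) = Inl j then 1 else 0) - tp h s (Inl j)" by simp
qed

lemma comp_visits_Suc: "t \<ge> T0 \<Longrightarrow> comp_visits j (Suc t) g = comp_visits j t g + ((if g (Suc t) = Inl j then 1 else 0) - tp g t (Inl j))"
proof -
  assume t: "t \<ge> T0"
  have e: "{T0..<Suc t} = insert t {T0..<t}" using t by auto
  show ?thesis unfolding comp_visits_def e by (simp add: add.commute)
qed

lemma comp_visits_step: "t \<ge> T0 \<Longrightarrow> \<bar>comp_visits j (Suc t) g - comp_visits j t g\<bar> \<le> 1"
  using comp_visits_Suc[of t j g] trans_prob_nonneg[of d r z0 g t "Inl j"] trans_prob_le_1[of d r z0 g t "Inl j"] by auto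

lemma comp_visits_extend: "t \<ge> T0 \<Longrightarrow> comp_visits j (Suc t) (h(Suc t := w)) = comp_visits j t h + ((if w = Inl j then 1 else 0) - tp h t (Inl j))"
proof -
  assume t: "t \<ge> T0"
  have 1: "comp_visits j t (h(Suc t := w)) = comp_visits j t h" by (rule comp_visits_cong) auto
  have 2: "tp (h(Suc t := w)) t = tp h t" using t by (intro trans_prob_cong) auto
  show ?thesis using comp_visits_Suc[OF t, of j "h(Suc t := w)"] 1 2 by simp
qed

lemma comp_visits_start: "comp_visits j T0 h = 0" unfolding comp_visits_def by simp

lemma sum_trans_prob_indicator: "(\<Sum>w\<in>V. tp h t w * (if w = Inl j then 1 else 0)) = tp h t (Inl j)"
proof (cases "Inl j \<in> V")
  case True
  have "(\<Sum>w\<in>V. tp h t w * (if w = Inl j then 1 else 0)) = (\<Sum>w\<in>V. if w = Inl j then tp h t w else 0)"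
    by (intro sum.cong) auto
  also have "\<dots> = tp h t (Inl j)" using True by (simp add: finite_Vd)
  finally show ?thesis .
next
  case False
  then have "\<not> adj d r (h t) (Inl j)" using adj_in_Vd by blast
  then have "tp h t (Inl j) = 0" by (rule trans_prob_eq_0)
  moreover have "(\<Sum>w\<in>V. tp h t w * (if w = Inl j then 1 else 0)) = 0" using False by (intro sum.neutral) auto
  ultimately show ?thesis by simp
qed

lemma one_step_second_moment:
  assumes ht: "h t \<in> V"
  shows "(\<Sum>w\<in>V. (x + ((if w = Inl j then 1 else 0) - tp h t (Inl j)))^2 * tp h t w) \<le> x^2 + 1"
proof -
  let ?p = "tp h t (Inl j)"
  define e where "e (w::vtx) = (if w = Inl j then 1 else 0) - ?p" for w
  have s1: "(\<Sum>w\<in>V. tp h t w) = 1" by (rule trans_prob_sum_1) (use d2 ht z0pos in auto)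
  have s2: "(\<Sum>w\<in>V. tp h t w * e w) = 0"
  proof -
    have "(\<Sum>w\<in>V. tp h t w * e w) = (\<Sum>w\<in>V. tp h t w * (if w = Inl j then 1 else 0)) - ?p * (\<Sum>w\<in>V. tp h t w)"
      unfolding e_def by (simp add: algebra_simps sum_subtractf sum_distrib_left)
    then show ?thesis using sum_trans_prob_indicator s1 by simp
  qed
  have eb: "(e w)^2 \<le> 1" for w
  proof -
    have "\<bar>e w\<bar> \<le> 1"
      using trans_prob_nonneg[of d r z0 h t "Inl j"] trans_prob_le_1[of d r z0 h t "Inl j"] unfolding e_def by auto
    then have "\<bar>e w\<bar>^2 \<le> 1^2" by (intro power_mono) auto
    then show ?thesis by simp
  qed
  have s3: "(\<Sum>w\<in>V. tp h t w * (e w)^2) \<le> 1"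
  proof -
    have "(\<Sum>w\<in>V. tp h t w * (e w)^2) \<le> (\<Sum>w\<in>V. tp h t w * 1)"
      using eb trans_prob_nonneg by (intro sum_mono mult_left_mono) auto
    then show ?thesis using s1 by simp
  qed
  have "(\<Sum>w\<in>V. (x + e w)^2 * tp h t w) = x^2 * (\<Sum>w\<in>V. tp h t w) + 2 * x * (\<Sum>w\<in>V. tp h t w * e w) + (\<Sum>w\<in>V. tp h t w * (e w)^2)"
    by (simp add: power2_eq_square algebra_simps sum.distrib sum_distrib_left)
  also have "\<dots> \<le> x^2 + 1" using s1 s2 s3 by simp
  finally show ?thesis unfolding e_def .
qed

lemma second_moment_bound: "t \<ge> T0 \<Longrightarrow> (\<Sum>h\<in>histories t. (comp_visits j t h)^2 * hist_prob t h) \<le> real t - real T0"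
proof (induction t rule: dec_induct)
  case base then show ?case by (simp add: comp_visits_start)
next
  case (step t)
  have "(\<Sum>g\<in>histories (Suc t). (comp_visits j (Suc t) g)^2 * hist_prob (Suc t) g)
      = (\<Sum>h\<in>histories t. \<Sum>w\<in>V. (comp_visits j t h + ((if w = Inl j then 1 else 0) - tp h t (Inl j)))^2 * (tp h t w * hist_prob t h))"
    using step(1) by (simp add: sum_histories_Suc hist_prob_Suc comp_visits_extend)
  also have "\<dots> \<le> (\<Sum>h\<in>histories t. ((comp_visits j t h)^2 + 1) * hist_prob t h)"
  proof (intro sum_mono)
    fix h assume h: "h \<in> histories t"
    have ht: "h t \<in> V" using histories_in_Vd[OF h] step(1) by auto
    have "(\<Sum>w\<in>V. (comp_visits j t h + ((if w = Inl j then 1 else 0) - tp h t (Inl j)))^2 * (tp h t w * hist_prob t h))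
       = (\<Sum>w\<in>V. (comp_visits j t h + ((if w = Inl j then 1 else 0) - tp h t (Inl j)))^2 * tp h t w) * hist_prob t h"
      by (simp add: sum_distrib_right mult.assoc)
    also have "\<dots> \<le> ((comp_visits j t h)^2 + 1) * hist_prob t h"
      using one_step_second_moment[of h t, OF ht] hist_prob_nonneg by (intro mult_right_mono) auto
    finally show "(\<Sum>w\<in>V. (comp_visits j t h + ((if w = Inl j then 1 else 0) - tp h t (Inl j)))^2 * (tp h t w * hist_prob t h))
       \<le> ((comp_visits j t h)^2 + 1) * hist_prob t h" .
  qed
  also have "\<dots> = (\<Sum>h\<in>histories t. (comp_visits j t h)^2 * hist_prob t h) + (\<Sum>h\<in>histories t. hist_prob t h)"
    by (simp add: algebra_simps sum.distrib)
  also have "\<dots> \<le> (real t - real T0) + 1" using step(3) sum_hist_prob[OF step(1)] by simp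
  finally show ?case using step(1) by simp
qed

text \<open>The event \<open>|comp_visits j t| \<ge> c\<close>, together with the null event that the path leaves \<open>V\<^sub>d\<close>.\<close>
definition deviation_set :: "nat \<Rightarrow> nat \<Rightarrow> real \<Rightarrow> 'a set" where
  "deviation_set j t c = (space M - (\<Union>h\<in>histories t. cylinder t h)) \<union> (\<Union>h\<in>{h\<in>histories t. c \<le> \<bar>comp_visits j t h\<bar>}. cylinder t h)"

lemma deviation_set_sets: "deviation_set j t c \<in> sets M"
  unfolding deviation_set_def using finite_histories
  by (intro sets.Un sets.Diff sets.top Union_cylinders_sets sets.finite_UN) auto

lemma deviation_set_measure: assumes t: "t \<ge> T0" and c: "c > 0"
  shows "measure M (deviation_set j t c) \<le> (real t - real T0) / c^2"
proof -
  let ?A = "space M - (\<Union>h\<in>histories t. cylinder t h)"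
  let ?S = "{h\<in>histories t. c \<le> \<bar>comp_visits j t h\<bar>}"
  let ?U = "\<Union>h\<in>?S. cylinder t h"
  have Anull: "?A \<in> null_sets M"
  proof -
    have "prob ?A = 0" using prob_compl[OF Union_cylinders_sets[of t]] measure_Union_cylinders[OF t] by simp
    then show ?thesis using Union_cylinders_sets[of t] by (auto simp: null_sets_def emeasure_eq_measure)
  qed
  have Us: "?U \<in> sets M" using finite_histories by (intro sets.finite_UN) auto
  have "measure M (deviation_set j t c) = measure M ?U"
    unfolding deviation_set_def by (subst Un_commute) (rule measure_Un_null_set[OF Us Anull])
  also have "\<dots> = (\<Sum>h\<in>?S. hist_prob t h)"
    unfolding hist_prob_def using cylinders_disjoint finite_histories
    by (intro measure_finite_Union) (auto simp: disjoint_family_on_def)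
  also have "\<dots> \<le> (\<Sum>h\<in>?S. (comp_visits j t h)^2 / c^2 * hist_prob t h)"
  proof (intro sum_mono)
    fix h assume "h \<in> ?S"
    then have "c \<le> \<bar>comp_visits j t h\<bar>" by simp
    then have "c^2 \<le> (comp_visits j t h)^2" using c by (metis abs_ge_zero less_le_trans order_less_imp_le power2_abs power_mono)
    then have c2: "1 \<le> (comp_visits j t h)^2 / c^2" using c by simp
    show "hist_prob t h \<le> (comp_visits j t h)^2 / c^2 * hist_prob t h" using mult_right_mono[OF c2 hist_prob_nonneg[of t h]] by simp
  qed
  also have "\<dots> \<le> (\<Sum>h\<in>histories t. (comp_visits j t h)^2 / c^2 * hist_prob t h)"
    using finite_histories hist_prob_nonneg by (intro sum_mono2) auto
  also have "\<dots> = (\<Sum>h\<in>histories t. (comp_visits j t h)^2 * hist_prob t h) / c^2"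
    by (simp add: sum_divide_distrib)
  also have "\<dots> \<le> (real t - real T0) / c^2"
    using second_moment_bound[OF t] by (intro divide_right_mono) auto
  finally show ?thesis .
qed

lemma deviation_set_contains: assumes "\<omega> \<in> space M" "c \<le> \<bar>comp_visits j t (\<lambda>s. X s \<omega>)\<bar>" shows "\<omega> \<in> deviation_set j t c"
proof (cases "\<omega> \<in> (\<Union>h\<in>histories t. cylinder t h)")
  case True
  then obtain h where h: "h \<in> histories t" "\<omega> \<in> cylinder t h" by blast
  then have "comp_visits j t (\<lambda>s. X s \<omega>) = comp_visits j t h" by (intro comp_visits_cong) (auto simp: cylinder_def)
  then show ?thesis using h assms unfolding deviation_set_def by auto
next
  case False then show ?thesis using assms unfolding deviation_set_def by auto
qed

lemma deviation_prob_along_squares: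
  assumes eta: "\<eta> > 0"
  shows "measure M (deviation_set j ((k+T0)^2) (\<eta> * real ((k+T0)^2))) \<le> (1/\<eta>^2) * inverse (real (Suc k) ^ 2)"
proof -
  let ?t = "(k+T0)^2"
  have tT: "?t \<ge> T0" by (metis le_add2 power2_nat_le_imp_le le_square power2_eq_square le_trans)
  have kpos: "real (k + T0) \<ge> real (Suc k)" using T0_ge_1 by simp
  have t_pos: "real ?t > 0" using T0_ge_1 by simp
  have "measure M (deviation_set j ?t (\<eta> * real ?t)) \<le> (real ?t - real T0) / (\<eta> * real ?t)^2"
    using eta t_pos by (intro deviation_set_measure[OF tT]) simp
  also have "\<dots> \<le> real ?t / (\<eta> * real ?t)^2"
    by (intro divide_right_mono) auto
  also have "\<dots> = (1/\<eta>^2) * inverse (real ?t)"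
  proof -
    have "y / (\<eta> * y)^2 = (1/\<eta>^2) * inverse y" if "y > 0" for y :: real
      using that eta by (simp add: power2_eq_square field_simps)
    then show ?thesis using t_pos by blast
  qed
  also have "\<dots> = (1/\<eta>^2) * inverse (real (k+T0) ^ 2)"
    by (simp only: of_nat_power)
  also have "\<dots> \<le> (1/\<eta>^2) * inverse (real (Suc k) ^ 2)"
    using kpos by (intro mult_left_mono le_imp_inverse_le power_mono) auto
  finally show ?thesis .
qed

lemma AE_small_along_squares: assumes eta: "\<eta> > 0"
  shows "AE \<omega> in M. eventually (\<lambda>k. \<bar>comp_visits j ((k+T0)^2) (\<lambda>s. X s \<omega>)\<bar> < \<eta> * real ((k+T0)^2)) sequentially"
proof -
  define A where "A k = deviation_set j ((k+T0)^2) (\<eta> * real ((k+T0)^2))" for k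
  have bound: "measure M (A k) \<le> (1/\<eta>^2) * inverse (real (Suc k) ^ 2)" for k
    unfolding A_def using deviation_prob_along_squares[OF eta] .
  have summ: "summable (\<lambda>k. measure M (A k))"
  proof (rule summable_comparison_test')
    show "summable (\<lambda>k. (1/\<eta>^2) * inverse (real (Suc k) ^ 2))"
      by (intro summable_mult) (subst summable_Suc_iff, rule inverse_power_summable, simp)
    show "norm (measure M (A k)) \<le> (1/\<eta>^2) * inverse (real (Suc k) ^ 2)" for k
      using bound[of k] by simp
  qed
  have "AE \<omega> in M. eventually (\<lambda>k. \<omega> \<in> space M - A k) sequentially"
    by (rule borel_cantelli_AE1[OF _ _ summ]) (use deviation_set_sets in \<open>auto simp: A_def emeasure_eq_measure\<close>)
  then show ?thesis
  proof (rule AE_mp[OF _ AE_I2], intro impI)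
    fix \<omega> assume w: "\<omega> \<in> space M" and ev: "eventually (\<lambda>k. \<omega> \<in> space M - A k) sequentially"
    show "eventually (\<lambda>k. \<bar>comp_visits j ((k+T0)^2) (\<lambda>s. X s \<omega>)\<bar> < \<eta> * real ((k+T0)^2)) sequentially"
      using ev
    proof (rule eventually_mono)
      fix k assume wk: "\<omega> \<in> space M - A k"
      show "\<bar>comp_visits j ((k+T0)^2) (\<lambda>s. X s \<omega>)\<bar> < \<eta> * real ((k+T0)^2)"
      proof (rule ccontr)
        assume "\<not> \<bar>comp_visits j ((k+T0)^2) (\<lambda>s. X s \<omega>)\<bar> < \<eta> * real ((k+T0)^2)"
        then have "\<eta> * real ((k+T0)^2) \<le> \<bar>comp_visits j ((k+T0)^2) (\<lambda>s. X s \<omega>)\<bar>" by simp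
        then have "\<omega> \<in> deviation_set j ((k+T0)^2) (\<eta> * real ((k+T0)^2))" by (rule deviation_set_contains[OF w])
        then show False using wk unfolding A_def by simp
      qed
    qed
  qed
qed

lemma AE_comp_visits_lln: "AE \<omega> in M. \<forall>j. (\<lambda>t. comp_visits j t (\<lambda>s. X s \<omega>) / real t) \<longlonglongrightarrow> 0"
proof -
  have A: "AE \<omega> in M. eventually (\<lambda>k. \<bar>comp_visits j ((k+T0)^2) (\<lambda>s. X s \<omega>)\<bar> < (1/(real n+1)) * real ((k+T0)^2)) sequentially" for j n
    by (rule AE_small_along_squares) simp
  have "AE \<omega> in M. \<forall>j. \<forall>n::nat. eventually (\<lambda>k. \<bar>comp_visits j ((k+T0)^2) (\<lambda>s. X s \<omega>)\<bar> < (1/(real n+1)) * real ((k+T0)^2)) sequentially"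
    unfolding AE_all_countable using A by blast
  then show ?thesis
  proof (rule eventually_mono, intro allI)
    fix \<omega> j
    assume a: "\<forall>j. \<forall>n::nat. eventually (\<lambda>k. \<bar>comp_visits j ((k+T0)^2) (\<lambda>s. X s \<omega>)\<bar> < (1/(real n+1)) * real ((k+T0)^2)) sequentially"
    show "(\<lambda>t. comp_visits j t (\<lambda>s. X s \<omega>) / real t) \<longlonglongrightarrow> 0"
      by (rule tendsto_zero_from_squares[of T0]) (use a comp_visits_step in auto)
  qed
qed

end

text \<open>Let \<open>\<pi>\<^sub>j \<ge> \<epsilon>\<close> (\<open>j \<in> J\<close>, \<open>|J| \<ge> 2\<close>) be occupation
  frequencies of total mass at most one and deficit at most \<open>\<theta>\<close>, and let \<open>\<nu>\<^sub>j \<ge> 0\<close> be the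
  frequencies of visits during the next block, of total at most one, which approximately obey the
  reinforcement rule \<open>\<nu>\<^sub>j \<approx> \<pi>\<^sub>j \<Sum>\<^sub>i\<^sub>\<noteq>\<^sub>j \<nu>\<^sub>i / (1 - \<pi>\<^sub>i)\<close> up to an error \<open>\<eta>\<close>. Then the
  updated frequencies \<open>(\<pi>\<^sub>j + \<delta> \<nu>\<^sub>j) / (1 + \<delta>)\<close> have spread (maximum minus minimum) at
  most \<open>1 - \<delta>\<epsilon>/4\<close> times the old spread, plus \<open>2\<delta>\<eta>\<close>.\<close>
locale contraction_setting =
  fixes J :: "nat set" and \<pi> \<nu> :: "nat \<Rightarrow> real" and \<epsilon> \<delta> \<eta> \<theta> :: real
  assumes finite_J: "finite J" and J_ne: "J \<noteq> {}" and J_other: "\<And>j. j \<in> J \<Longrightarrow> \<exists>k\<in>J. k \<noteq> j"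
    and eps: "\<epsilon> > 0"
    and pi_ge: "\<And>j. j \<in> J \<Longrightarrow> \<pi> j \<ge> \<epsilon>"
    and pi_sum: "(\<Sum>j\<in>J. \<pi> j) \<le> 1" and pi_deficit: "1 - (\<Sum>j\<in>J. \<pi> j) \<le> \<theta>"
    and nu_nonneg: "\<And>j. j \<in> J \<Longrightarrow> \<nu> j \<ge> 0" and nu_sum: "(\<Sum>j\<in>J. \<nu> j) \<le> 1"
    and drift: "\<And>j. j \<in> J \<Longrightarrow> \<bar>\<nu> j - \<pi> j * (\<Sum>i\<in>J-{j}. \<nu> i / (1 - \<pi> i))\<bar> \<le> \<eta>"
    and delta: "0 < \<delta>" "\<delta> \<le> \<epsilon>^2/4"
    and small1: "real (card J) * \<eta> \<le> 1"
    and small2: "real (card J) * \<eta> + 2 * \<theta> / \<epsilon>^2 \<le> \<epsilon>/2"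
begin

definition S :: real where "S = (\<Sum>i\<in>J. \<nu> i / (1 - \<pi> i))"
definition err :: "nat \<Rightarrow> real" where "err j = \<nu> j - \<pi> j * (\<Sum>i\<in>J-{j}. \<nu> i / (1 - \<pi> i))"
definition Q :: real where "Q = (\<Sum>i\<in>J. \<pi> i * (1 - \<pi> i))"
definition Mx :: real where "Mx = Max (\<pi> ` J)"
definition Mn :: real where "Mn = Min (\<pi> ` J)"

lemma pi_nonneg: "i \<in> J \<Longrightarrow> \<pi> i \<ge> 0"
  using pi_ge eps by force

lemma pi_le: assumes i: "i \<in> J" shows "\<pi> i \<le> 1 - \<epsilon>"
proof -
  obtain k where k: "k \<in> J" "k \<noteq> i" using J_other[OF i] by blast
  have "\<pi> i + \<pi> k = (\<Sum>j\<in>{i,k}. \<pi> j)" using k by simp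
  also have "\<dots> \<le> (\<Sum>j\<in>J. \<pi> j)" using i k finite_J pi_nonneg by (intro sum_mono2) auto
  finally show ?thesis using pi_sum pi_ge[OF k(1)] by linarith
qed

lemma one_minus_pi_pos: "i \<in> J \<Longrightarrow> 1 - \<pi> i > 0"
  using pi_le eps by force

lemma err_bound: "j \<in> J \<Longrightarrow> \<bar>(1 - \<pi> j) * err j\<bar> \<le> \<eta>"
proof -
  assume j: "j \<in> J"
  have "\<bar>(1 - \<pi> j) * err j\<bar> = (1 - \<pi> j) * \<bar>err j\<bar>" using one_minus_pi_pos[OF j] by (simp add: abs_mult)
  also have "\<dots> \<le> 1 * \<eta>"
    using drift[OF j] pi_nonneg[OF j] one_minus_pi_pos[OF j] unfolding err_def by (intro mult_mono) auto
  finally show ?thesis by simp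
qed

lemma S_nonneg: "S \<ge> 0"
  unfolding S_def using nu_nonneg one_minus_pi_pos by (intro sum_nonneg divide_nonneg_pos) auto

lemma nu_decomposition: assumes j: "j \<in> J" shows "\<nu> j = (1 - \<pi> j) * (\<pi> j * S + err j)"
proof -
  have S_split: "S = \<nu> j / (1 - \<pi> j) + (\<Sum>i\<in>J-{j}. \<nu> i / (1 - \<pi> i))"
    unfolding S_def using finite_J j by (simp add: sum.remove)
  have "(1 - \<pi> j) * (\<pi> j * (\<nu> j / (1 - \<pi> j))) = \<pi> j * \<nu> j"
    using one_minus_pi_pos[OF j] by simp
  then show ?thesis unfolding err_def S_split by (simp add: algebra_simps)
qed

lemma Q_ge: "Q \<ge> \<epsilon>^2"
proof -
  obtain i where i: "i \<in> J" using J_ne by blast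
  have "\<epsilon> * \<epsilon> \<le> \<pi> i * (1 - \<pi> i)"
    using pi_ge[OF i] pi_le[OF i] eps by (intro mult_mono) auto
  also have "\<dots> \<le> Q"
  proof -
    have "0 \<le> \<pi> x * (1 - \<pi> x)" if "x \<in> J" for x
      using pi_nonneg[OF that] one_minus_pi_pos[OF that] by simp
    then show ?thesis unfolding Q_def using finite_J i by (intro member_le_sum) auto
  qed
  finally show ?thesis by (simp add: power2_eq_square)
qed

text \<open>Summing the decomposition over \<open>j\<close> bounds \<open>S\<close>: the total visit mass is at most one.\<close>
lemma S_Q_le: "S * Q \<le> 1 + real (card J) * \<eta>"
proof -
  have "(\<Sum>j\<in>J. \<nu> j) = (\<Sum>j\<in>J. S * (\<pi> j * (1 - \<pi> j)) + (1 - \<pi> j) * err j)"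
    using nu_decomposition by (intro sum.cong) (auto simp: algebra_simps)
  then have sum_nu: "(\<Sum>j\<in>J. \<nu> j) = S * Q + (\<Sum>j\<in>J. (1 - \<pi> j) * err j)"
    unfolding Q_def by (simp add: sum.distrib sum_distrib_left)
  have "\<bar>\<Sum>j\<in>J. (1 - \<pi> j) * err j\<bar> \<le> (\<Sum>j\<in>J. \<eta>)"
    using err_bound by (intro order_trans[OF sum_abs] sum_mono) auto
  then show ?thesis using sum_nu nu_sum by simp
qed

lemma S_le: "S \<le> 2 / \<epsilon>^2"
proof -
  have "S * \<epsilon>^2 \<le> S * Q" using S_nonneg Q_ge by (intro mult_left_mono) auto
  then have "S * \<epsilon>^2 \<le> 2" using S_Q_le small1 by linarith
  then show ?thesis using eps by (simp add: field_simps)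
qed

text \<open>The deterministic part of the update, \<open>f x = x + \<delta> S x (1 - x)\<close>, is monotone on \<open>[0,1]\<close>.\<close>
definition f :: "real \<Rightarrow> real" where "f x = x + \<delta> * S * x * (1 - x)"

lemma f_diff: "f y - f x = (y - x) * (1 + \<delta> * S * (1 - x - y))"
  unfolding f_def by (simp add: algebra_simps)

lemma f_mono: assumes "0 \<le> x" "x \<le> y" "y \<le> 1" shows "f x \<le> f y"
proof -
  have "\<delta> * S \<le> (\<epsilon>^2/4) * (2/\<epsilon>^2)" using delta S_le S_nonneg by (intro mult_mono) auto
  also have "\<dots> = 1/2" using eps by simp
  finally have "\<delta> * S \<le> 1/2" .
  moreover have "\<delta> * S * (1 - x - y) \<ge> \<delta> * S * (-1)" using assms delta S_nonneg
    by (intro mult_left_mono) auto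
  ultimately have "(y - x) * (1 + \<delta> * S * (1 - x - y)) \<ge> 0" using assms by (intro mult_nonneg_nonneg) auto
  then show ?thesis using f_diff[of y x] by linarith
qed

lemma update_eq: assumes "i \<in> J" shows "\<pi> i + \<delta> * \<nu> i = f (\<pi> i) + \<delta> * ((1 - \<pi> i) * err i)"
  unfolding f_def by (subst nu_decomposition[OF assms]) (simp add: algebra_simps)

lemma Mx_Mn:
  shows "\<And>j. j \<in> J \<Longrightarrow> \<pi> j \<le> Mx" "\<And>j. j \<in> J \<Longrightarrow> Mn \<le> \<pi> j"
    and "Mx \<le> 1" "Mx \<ge> 0" "Mn \<ge> \<epsilon>" "Mn \<le> Mx"
proof -
  have Mx: "Mx \<in> \<pi> ` J" and Mn: "Mn \<in> \<pi> ` J" unfolding Mx_def Mn_def using finite_J J_ne by auto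
  show "\<And>j. j \<in> J \<Longrightarrow> \<pi> j \<le> Mx" "\<And>j. j \<in> J \<Longrightarrow> Mn \<le> \<pi> j"
    unfolding Mx_def Mn_def using finite_J by auto
  then show "Mx \<le> 1" "Mx \<ge> 0" "Mn \<ge> \<epsilon>" "Mn \<le> Mx"
    using Mx Mn pi_le pi_nonneg pi_ge eps by force+
qed

lemma extremes_bound: "1 - Mx - Mn \<le> (1 - \<epsilon>) * Q + (1 - (\<Sum>i\<in>J. \<pi> i))"
proof -
  define s where "s = (\<Sum>i\<in>J. \<pi> i)"
  have "(\<Sum>i\<in>J. \<pi> i ^ 2) \<le> (\<Sum>i\<in>J. Mx * \<pi> i)"
    using Mx_Mn(1) pi_nonneg by (intro sum_mono) (auto simp: power2_eq_square intro: mult_right_mono)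
  then have sq: "(\<Sum>i\<in>J. \<pi> i ^ 2) \<le> Mx * s" unfolding s_def by (simp add: sum_distrib_left)
  have Q_eq: "Q = s - (\<Sum>i\<in>J. \<pi> i ^ 2)" unfolding Q_def s_def
    by (simp add: algebra_simps power2_eq_square sum_subtractf)
  have s01: "0 \<le> s" "s \<le> 1" unfolding s_def using pi_nonneg pi_sum by (auto intro: sum_nonneg)
  have eps1: "\<epsilon> \<le> 1" using Mx_Mn by linarith
  have "\<epsilon> * s * (1 - Mx) \<le> \<epsilon> * 1 * 1" using eps s01 Mx_Mn by (intro mult_mono) auto
  then have "Mn \<ge> \<epsilon> * s * (1 - Mx)" using Mx_Mn by linarith
  moreover have "Mx \<ge> Mx * s" using Mx_Mn s01 by (simp add: mult_left_le)
  moreover have "(1 - \<epsilon>) * Q \<ge> (1 - \<epsilon>) * (s - Mx * s)" using Q_eq sq eps1 by (intro mult_left_mono) auto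
  moreover have "(1 - \<epsilon>) * (s - Mx * s) = s - Mx * s - \<epsilon> * s * (1 - Mx)" by (simp add: algebra_simps)
  ultimately show ?thesis unfolding s_def by linarith
qed

text \<open>Hence the slope of \<open>f\<close> between the extremes is at most \<open>1 + \<delta> (1 - \<epsilon>/2)\<close>.\<close>
lemma slope_bound: "S * (1 - Mx - Mn) \<le> 1 - \<epsilon>/2"
proof -
  have eps1: "\<epsilon> \<le> 1" using Mx_Mn by linarith
  have eta0: "\<eta> \<ge> 0" using drift J_ne by force
  have deficit: "0 \<le> 1 - (\<Sum>i\<in>J. \<pi> i)" using pi_sum by simp
  have "S * (1 - Mx - Mn) \<le> S * ((1 - \<epsilon>) * Q + (1 - (\<Sum>i\<in>J. \<pi> i)))"
    using extremes_bound S_nonneg by (intro mult_left_mono) auto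
  also have "\<dots> = (1 - \<epsilon>) * (S * Q) + S * (1 - (\<Sum>i\<in>J. \<pi> i))" by (simp add: algebra_simps)
  also have "\<dots> \<le> (1 - \<epsilon>) * (1 + real (card J) * \<eta>) + (2/\<epsilon>^2) * \<theta>"
    using S_Q_le eps1 S_le S_nonneg deficit pi_deficit by (intro add_mono mult_mono mult_left_mono) auto
  also have "\<dots> \<le> 1 - \<epsilon> + real (card J) * \<eta> + 2 * \<theta> / \<epsilon>^2"
    using eps eps1 eta0 mult_left_le_one_le[of "real (card J) * \<eta>" "1 - \<epsilon>"] by (simp add: algebra_simps)
  also have "\<dots> \<le> 1 - \<epsilon>/2" using small2 by linarith
  finally show ?thesis .
qed

lemma spread_contraction:
  assumes j: "j \<in> J" and k: "k \<in> J"
  shows "(\<pi> j + \<delta> * \<nu> j)/(1+\<delta>) - (\<pi> k + \<delta> * \<nu> k)/(1+\<delta>)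
     \<le> (Max (\<pi> ` J) - Min (\<pi> ` J)) * (1 - \<delta> * \<epsilon> / 4) + 2 * \<delta> * \<eta>"
proof -
  have eta0: "\<eta> \<ge> 0" using drift[OF j] by linarith
  have eps1: "\<epsilon> \<le> 1" using Mx_Mn by linarith
  have "f Mx - f Mn = (Mx - Mn) * (1 + \<delta> * (S * (1 - Mn - Mx)))" using f_diff[of Mx Mn] by (simp add: algebra_simps)
  also have "\<dots> \<le> (Mx - Mn) * (1 + \<delta> * (1 - \<epsilon>/2))"
    using slope_bound Mx_Mn delta by (intro mult_left_mono add_left_mono) (auto simp: algebra_simps)
  finally have f_ext: "f Mx - f Mn \<le> (Mx - Mn) * (1 + \<delta> * (1 - \<epsilon>/2))" .
  have "f (\<pi> j) \<le> f Mx" using Mx_Mn pi_nonneg[OF j] j by (intro f_mono) auto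
  moreover have "f Mn \<le> f (\<pi> k)" using Mx_Mn pi_le[OF k] eps k by (intro f_mono) auto
  moreover have "\<delta> * ((1 - \<pi> j) * err j) \<le> \<delta> * \<eta>" "- (\<delta> * ((1 - \<pi> k) * err k)) \<le> \<delta> * \<eta>"
    using err_bound[OF j] err_bound[OF k] delta mult_left_mono[of "- ((1 - \<pi> k) * err k)" \<eta> \<delta>]
    by (auto intro: mult_left_mono)
  ultimately have diff: "(\<pi> j + \<delta> * \<nu> j) - (\<pi> k + \<delta> * \<nu> k) \<le> (Mx - Mn) * (1 + \<delta> * (1 - \<epsilon>/2)) + 2 * \<delta> * \<eta>"
    using update_eq[OF j] update_eq[OF k] f_ext by linarith
  have "\<delta> \<le> 1" using delta eps1 eps power_le_one[of \<epsilon> 2] by linarith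
  then have "1 + \<delta> * (1 - \<epsilon>/2) \<le> (1 - \<delta> * \<epsilon> / 4) * (1 + \<delta>)"
    using delta eps mult_left_le[of \<delta> "\<delta> * \<epsilon> / 4"] by (simp add: algebra_simps)
  then have "(Mx - Mn) * (1 + \<delta> * (1 - \<epsilon>/2)) \<le> (Mx - Mn) * (1 - \<delta> * \<epsilon> / 4) * (1 + \<delta>)"
    using Mx_Mn by (simp add: mult.assoc mult_left_mono)
  moreover have "2 * \<delta> * \<eta> * 1 \<le> 2 * \<delta> * \<eta> * (1 + \<delta>)" using delta eta0 by (intro mult_left_mono) auto
  moreover have "((Mx - Mn) * (1 - \<delta> * \<epsilon> / 4) + 2 * \<delta> * \<eta>) * (1 + \<delta>)
      = (Mx - Mn) * (1 - \<delta> * \<epsilon> / 4) * (1 + \<delta>) + 2 * \<delta> * \<eta> * (1 + \<delta>)"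
    by (rule distrib_right)
  ultimately have "(\<pi> j + \<delta> * \<nu> j) - (\<pi> k + \<delta> * \<nu> k) \<le> ((Mx - Mn) * (1 - \<delta> * \<epsilon> / 4) + 2 * \<delta> * \<eta>) * (1 + \<delta>)"
    using diff by linarith
  then show ?thesis using delta unfolding Mx_def Mn_def by (simp add: diff_divide_distrib[symmetric] divide_le_eq)
qed

end

lemma linear_recursion_bound:
  fixes x :: "nat \<Rightarrow> real"
  assumes rho: "0 < \<rho>" "\<rho> \<le> 1" and step: "\<And>k. x (Suc k) \<le> (1 - \<rho>) * x k + \<beta>" and g: "\<gamma> > 0"
  shows "\<exists>K. \<forall>k\<ge>K. x k \<le> \<beta> / \<rho> + \<gamma>"
proof -
  define y where "y k = x k - \<beta> / \<rho>" for k
  have ystep: "y (Suc k) \<le> (1 - \<rho>) * y k" for k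
  proof -
    have "(1 - \<rho>) * (\<beta> / \<rho>) + \<beta> = \<beta> / \<rho>" using rho by (simp add: field_simps)
    then show ?thesis using step[of k] unfolding y_def by (simp add: algebra_simps)
  qed
  have ybound: "y k \<le> (1 - \<rho>)^k * \<bar>y 0\<bar>" for k
  proof (induction k)
    case 0 then show ?case by simp
  next
    case (Suc k)
    have "y (Suc k) \<le> (1 - \<rho>) * y k" by (rule ystep)
    also have "\<dots> \<le> (1 - \<rho>) * ((1 - \<rho>)^k * \<bar>y 0\<bar>)" using Suc rho by (intro mult_left_mono) auto
    finally show ?case by simp
  qed
  have "(\<lambda>k. (1 - \<rho>)^k * \<bar>y 0\<bar>) \<longlonglongrightarrow> 0 * \<bar>y 0\<bar>"
    using rho by (intro tendsto_mult LIMSEQ_power_zero tendsto_const) auto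
  then have "eventually (\<lambda>k. (1 - \<rho>)^k * \<bar>y 0\<bar> < \<gamma>) sequentially"
    using g by (simp add: order_tendsto_iff)
  then obtain K where K: "\<And>k. k \<ge> K \<Longrightarrow> (1 - \<rho>)^k * \<bar>y 0\<bar> < \<gamma>" unfolding eventually_sequentially by blast
  show ?thesis
  proof (intro exI allI impI)
    fix k assume "k \<ge> K"
    then have "y k < \<gamma>" using ybound[of k] K[of k] by linarith
    then show "x k \<le> \<beta> / \<rho> + \<gamma>" unfolding y_def by simp
  qed
qed

lemma find_block:
  fixes a :: "nat \<Rightarrow> nat"
  assumes inc: "\<And>k. a k < a (Suc k)" and t: "a k0 \<le> t"
  shows "\<exists>k\<ge>k0. a k \<le> t \<and> t < a (Suc k)"
  using t
proof (induction t rule: dec_induct)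
  case base then show ?case using inc by blast
next
  case (step t)
  then obtain k where k: "k \<ge> k0" "a k \<le> t" "t < a (Suc k)" by blast
  show ?case
  proof (cases "Suc t < a (Suc k)")
    case True then show ?thesis using k by auto
  next
    case False
    then have "Suc t = a (Suc k)" using k by simp
    then show ?thesis using k inc[of "Suc k"] by (intro exI[of _ "Suc k"]) auto
  qed
qed

text \<open>The deterministic system satisfied by one path on the event \<open>C\<^sub>\<epsilon>\<close>, from time \<open>T\<close> on:
  \<open>N j t\<close> is the occupation of interior vertex \<open>j\<close>, bounded below by \<open>\<epsilon> t\<close>; the leaf mass
  \<open>t - \<Sum>N\<close> is \<open>O(t\<^sup>1\<^sup>-\<^sup>\<epsilon>)\<close>; the counts grow by unit steps; and the increment of \<open>N j\<close> over
  \<open>[a, t)\<close> follows the reinforcement rule (jumping from \<open>i\<close> to \<open>j\<close> with probability about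
  \<open>N j / (s - N i)\<close>) up to a martingale term \<open>Mart j\<close> of order \<open>o(t)\<close> and leaf corrections.
  The conclusion is that \<open>N j t / t \<rightarrow> 1/d\<close> for all \<open>j\<close>.\<close>
locale interior_dynamics =
  fixes d :: nat and \<epsilon> :: real and T :: nat and N :: "nat \<Rightarrow> nat \<Rightarrow> real"
    and Mart :: "nat \<Rightarrow> nat \<Rightarrow> real" and K :: real
  assumes d2: "d \<ge> 2" and eps: "\<epsilon> > 0" and T1: "T \<ge> 1" and K0: "K \<ge> 0"
    and N_lower: "\<And>t j. t \<ge> T \<Longrightarrow> j \<in> {1..d} \<Longrightarrow> N j t \<ge> \<epsilon> * real t"
    and N_sum_le: "\<And>t. t \<ge> T \<Longrightarrow> (\<Sum>j\<in>{1..d}. N j t) \<le> real t"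
    and leaf_mass_bound: "\<And>t. t \<ge> T \<Longrightarrow> real t - (\<Sum>j\<in>{1..d}. N j t) \<le> K * real t powr (1 - \<epsilon>)"
    and N_increment: "\<And>t j. t \<ge> T \<Longrightarrow> j \<in> {1..d} \<Longrightarrow> 0 \<le> N j (Suc t) - N j t \<and> N j (Suc t) - N j t \<le> 1"
    and N_sum_increment: "\<And>t. t \<ge> T \<Longrightarrow> (\<Sum>j\<in>{1..d}. N j (Suc t)) - (\<Sum>j\<in>{1..d}. N j t) \<le> 1"
    and drift_approx: "\<And>a t j. T < a \<Longrightarrow> a \<le> t \<Longrightarrow> j \<in> {1..d} \<Longrightarrow>
       \<bar>N j t - N j a - (\<Sum>s\<in>{a..<t}. \<Sum>i\<in>{1..d}-{j}. (N i s - N i (s-1)) * (N j s / (real s - N i s)))\<bar>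
       \<le> \<bar>Mart j t - Mart j a\<bar> + (real t - (\<Sum>j\<in>{1..d}. N j t)) + (\<Sum>s\<in>{a..<t}. (real s - (\<Sum>j\<in>{1..d}. N j s)) / (\<epsilon> * real s))"
    and mart_small: "\<And>j. j \<in> {1..d} \<Longrightarrow> (\<lambda>t. Mart j t / real t) \<longlonglongrightarrow> 0"
begin

abbreviation "J \<equiv> {1..d}"
definition leaf_mass :: "nat \<Rightarrow> real" where "leaf_mass t = real t - (\<Sum>j\<in>J. N j t)"
definition frac :: "nat \<Rightarrow> nat \<Rightarrow> real" where "frac t j = N j t / real t"
definition spread :: "nat \<Rightarrow> real" where "spread t = Max (frac t ` J) - Min (frac t ` J)"

lemma finite_J: "finite J" and J_ne: "J \<noteq> {}" and card_J: "card J = d" using d2 by auto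

lemma J_other: "j \<in> J \<Longrightarrow> \<exists>k\<in>J. k \<noteq> j"
proof -
  assume j: "j \<in> J"
  show ?thesis
  proof (cases "j = 1")
    case True then show ?thesis using d2 by (intro bexI[of _ 2]) auto
  next
    case False then show ?thesis using d2 by (intro bexI[of _ 1]) auto
  qed
qed

lemma leaf_mass_nonneg: "t \<ge> T \<Longrightarrow> leaf_mass t \<ge> 0" using N_sum_le unfolding leaf_mass_def by simp
lemma leaf_mass_le: "t \<ge> T \<Longrightarrow> leaf_mass t \<le> K * real t powr (1 - \<epsilon>)" using leaf_mass_bound unfolding leaf_mass_def by simp

lemma N_nonneg: "t \<ge> T \<Longrightarrow> j \<in> J \<Longrightarrow> N j t \<ge> 0"
  using N_lower[of t j] eps by (smt (verit) mult_nonneg_nonneg of_nat_0_le_iff)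

lemma N_mono: assumes "T \<le> a" "a \<le> t" "j \<in> J" shows "0 \<le> N j t - N j a \<and> N j t - N j a \<le> real t - real a"
  using assms(2)
proof (induction t rule: dec_induct)
  case base then show ?case by simp
next
  case (step t)
  then show ?case using N_increment[of t j] assms by auto
qed

lemma leaf_mass_mono: assumes "T \<le> a" "a \<le> t" shows "leaf_mass a \<le> leaf_mass t"
  using assms(2)
proof (induction t rule: dec_induct)
  case base then show ?case by simp
next
  case (step t)
  then show ?case using N_sum_increment[of t] assms unfolding leaf_mass_def by auto
qed

lemma N_gap: assumes "t \<ge> T" "i \<in> J" shows "real t - N i t \<ge> \<epsilon> * real t"
proof -
  obtain k where k: "k \<in> J" "k \<noteq> i" using J_other[OF assms(2)] by blast
  have "N i t + N k t = (\<Sum>j\<in>{i,k}. N j t)" using k by simp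
  also have "\<dots> \<le> (\<Sum>j\<in>J. N j t)"
    by (rule sum_mono2[OF finite_J]) (use k assms(2) N_nonneg[OF assms(1)] in auto)
  also have "\<dots> \<le> real t" using N_sum_le assms by simp
  finally show ?thesis using N_lower[OF assms(1) k(1)] by linarith
qed

lemma N_pair_le: assumes "t \<ge> T" "i \<in> J" "j \<in> J" "i \<noteq> j" shows "N j t \<le> real t - N i t"
proof -
  have "N i t + N j t = (\<Sum>k\<in>{i,j}. N k t)" using assms by simp
  also have "\<dots> \<le> (\<Sum>k\<in>J. N k t)"
    by (rule sum_mono2[OF finite_J]) (use assms(2,3) N_nonneg[OF assms(1)] in auto)
  also have "\<dots> \<le> real t" using N_sum_le assms by simp
  finally show ?thesis by linarith
qed

lemma ratio_variation:
  assumes a: "T \<le> a" "1 \<le> a" "a \<le> s" and ij: "i \<in> J" "j \<in> J" "i \<noteq> j"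
  shows "\<bar>N j s / (real s - N i s) - N j a / (real a - N i a)\<bar> \<le> 2 * (real s - real a) / (\<epsilon> * real a)"
proof -
  define x where "x = N j s"
  define y where "y = real s - N i s"
  define x' where "x' = N j a"
  define y' where "y' = real a - N i a"
  have ea: "\<epsilon> * real a > 0" using eps a by simp
  have y'ge: "y' \<ge> \<epsilon> * real a" unfolding y'_def using N_gap a ij by simp
  have mi: "0 \<le> N i s - N i a \<and> N i s - N i a \<le> real s - real a" using N_mono[OF a(1) a(3) ij(1)] .
  have mj: "0 \<le> N j s - N j a \<and> N j s - N j a \<le> real s - real a" using N_mono[OF a(1) a(3) ij(2)] .
  have yy: "y \<ge> y'" "y - y' \<le> real s - real a" using mi unfolding y_def y'_def by auto
  have xx: "\<bar>x - x'\<bar> \<le> real s - real a" using mj unfolding x_def x'_def by auto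
  have x'0: "0 \<le> x'" "x' \<le> y'" unfolding x'_def y'_def using N_nonneg N_pair_le a ij by auto
  have y'0: "y' > 0" using y'ge ea by linarith
  have y0: "y > 0" using yy y'0 by linarith
  have sa: "real s - real a \<ge> 0" using a by simp
  have eq: "x / y - x' / y' = ((x - x') * y' - x' * (y - y')) / (y * y')"
    using y0 y'0 by (simp add: field_simps)
  have num: "\<bar>(x - x') * y' - x' * (y - y')\<bar> \<le> 2 * (real s - real a) * y'"
  proof -
    have "\<bar>(x - x') * y' - x' * (y - y')\<bar> \<le> \<bar>x - x'\<bar> * y' + x' * (y - y')"
    proof -
      have e1: "\<bar>(x - x') * y'\<bar> = \<bar>x - x'\<bar> * y'" using y'0 by (simp add: abs_mult)
      have e2: "\<bar>x' * (y - y')\<bar> = x' * (y - y')" using x'0 yy by (simp add: abs_mult)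
      show ?thesis using abs_triangle_ineq4[of "(x - x') * y'" "x' * (y - y')"] e1 e2 by linarith
    qed
    also have "\<dots> \<le> (real s - real a) * y' + y' * (real s - real a)"
      using xx y'0 x'0 yy sa by (intro add_mono mult_mono) auto
    finally show ?thesis by (simp add: algebra_simps)
  qed
  have "\<bar>x / y - x' / y'\<bar> = \<bar>(x - x') * y' - x' * (y - y')\<bar> / (y * y')"
    unfolding eq using y0 y'0 by (simp add: abs_divide)
  also have "\<dots> \<le> 2 * (real s - real a) * y' / (y * y')"
    using num y0 y'0 by (intro divide_right_mono) auto
  also have "\<dots> = 2 * (real s - real a) / y" using y'0 by simp
  also have "\<dots> \<le> 2 * (real s - real a) / (\<epsilon> * real a)"
    using sa y'ge yy ea by (intro divide_left_mono) auto
  finally show ?thesis unfolding x_def y_def x'_def y'_def .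
qed

definition increment :: "nat \<Rightarrow> nat \<Rightarrow> real" where "increment i s = N i s - N i (s-1)"

lemma increment_bounds: assumes "i \<in> J" "T < s" shows "0 \<le> increment i s \<and> increment i s \<le> 1"
proof -
  have "Suc (s - 1) = s" using assms by auto
  then show ?thesis using N_increment[of "s-1" i] assms unfolding increment_def by auto
qed

lemma telescope_increments: assumes "1 \<le> a" "a \<le> b"
  shows "(\<Sum>s\<in>{a..<b}. increment i s) = N i (b-1) - N i (a-1)"
  using assms(2)
proof (induction b rule: dec_induct)
  case base then show ?case by simp
next
  case (step b)
  have "{a..<Suc b} = insert b {a..<b}" using step by auto
  moreover have "Suc b - 1 = Suc (b - 1)" using step assms by simp
  moreover have "b = Suc (b - 1)" using step assms by simp
  ultimately show ?case using step(3) unfolding increment_def by (simp add: algebra_simps)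
qed

definition ratio :: "nat \<Rightarrow> nat \<Rightarrow> nat \<Rightarrow> real" where "ratio i j a = N j a / (real a - N i a)"

lemma ratio_bounds: assumes "T \<le> a" "1 \<le> a" "i \<in> J" "j \<in> J" "i \<noteq> j" shows "0 \<le> ratio i j a" "ratio i j a \<le> 1"
proof -
  have "\<epsilon> * real a > 0" using eps assms(2) by simp
  then have p: "real a - N i a > 0" using N_gap[of a i] assms by linarith
  show "0 \<le> ratio i j a" unfolding ratio_def using N_nonneg[of a j] assms p by simp
  show "ratio i j a \<le> 1" unfolding ratio_def using N_pair_le[of a i j] assms p by simp
qed

lemma block_cross_term:
  assumes a: "T < a" "a \<le> b" and ij: "i \<in> J" "j \<in> J" "i \<noteq> j"
  shows "\<bar>(\<Sum>s\<in>{a..<b}. increment i s * (N j s / (real s - N i s))) - ratio i j a * (N i b - N i a)\<bar>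
       \<le> 2 * (real b - real a)^2 / (\<epsilon> * real a) + 1"
proof -
  have a1: "1 \<le> a" "T \<le> a" using a T1 by auto
  define x where "x s = N j s / (real s - N i s)" for s
  have c01: "0 \<le> ratio i j a" "ratio i j a \<le> 1" using ratio_bounds[OF a1(2) a1(1) ij] by auto
  have split: "(\<Sum>s\<in>{a..<b}. increment i s * x s) - ratio i j a * (N i b - N i a)
     = (\<Sum>s\<in>{a..<b}. increment i s * (x s - ratio i j a))
       + ratio i j a * ((\<Sum>s\<in>{a..<b}. increment i s) - (N i b - N i a))"
    by (simp add: algebra_simps sum_subtractf sum_distrib_left sum_distrib_right)
  have each_step: "\<bar>increment i s * (x s - ratio i j a)\<bar> \<le> 2 * (real b - real a) / (\<epsilon> * real a)"
    if s: "s \<in> {a..<b}" for s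
  proof -
    have "\<bar>x s - ratio i j a\<bar> \<le> 2 * (real s - real a) / (\<epsilon> * real a)"
      unfolding x_def ratio_def using ratio_variation[of a s i j] a1 s ij by auto
    also have "\<dots> \<le> 2 * (real b - real a) / (\<epsilon> * real a)"
      using s eps a1 by (intro divide_right_mono) auto
    finally have "\<bar>x s - ratio i j a\<bar> \<le> 2 * (real b - real a) / (\<epsilon> * real a)" .
    moreover have "\<bar>increment i s\<bar> \<le> 1" using increment_bounds[OF ij(1), of s] s a by auto
    ultimately have "\<bar>increment i s\<bar> * \<bar>x s - ratio i j a\<bar> \<le> 1 * (2 * (real b - real a) / (\<epsilon> * real a))"
      by (intro mult_mono) auto
    then show ?thesis by (simp add: abs_mult)
  qed
  have A: "\<bar>\<Sum>s\<in>{a..<b}. increment i s * (x s - ratio i j a)\<bar> \<le> 2 * (real b - real a)^2 / (\<epsilon> * real a)"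
  proof -
    have "\<bar>\<Sum>s\<in>{a..<b}. increment i s * (x s - ratio i j a)\<bar>
        \<le> (\<Sum>s\<in>{a..<b}. 2 * (real b - real a) / (\<epsilon> * real a))"
      using each_step by (intro order_trans[OF sum_abs] sum_mono) auto
    also have "\<dots> = 2 * (real b - real a)^2 / (\<epsilon> * real a)"
      using a by (simp add: of_nat_diff power2_eq_square)
    finally show ?thesis .
  qed
  have B: "\<bar>ratio i j a * ((\<Sum>s\<in>{a..<b}. increment i s) - (N i b - N i a))\<bar> \<le> 1"
  proof -
    have "\<bar>(\<Sum>s\<in>{a..<b}. increment i s) - (N i b - N i a)\<bar> \<le> 1"
      using increment_bounds[OF ij(1), of b] increment_bounds[OF ij(1), of a] a
        telescope_increments[OF a1(1) a(2), of i]
      unfolding increment_def by (auto simp: abs_le_iff)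
    then have "\<bar>ratio i j a\<bar> * \<bar>(\<Sum>s\<in>{a..<b}. increment i s) - (N i b - N i a)\<bar> \<le> 1 * 1"
      using c01 by (intro mult_mono) auto
    then show ?thesis by (simp add: abs_mult)
  qed
  show ?thesis using split A B unfolding x_def by linarith
qed

lemma block_drift:
  assumes a: "T < a" "a \<le> b" and j: "j \<in> J"
  shows "\<bar>(N j b - N j a) - (\<Sum>i\<in>J-{j}. ratio i j a * (N i b - N i a))\<bar>
     \<le> \<bar>Mart j b - Mart j a\<bar> + leaf_mass b + (\<Sum>s\<in>{a..<b}. leaf_mass s / (\<epsilon> * real s))
        + real d * (2 * (real b - real a)^2 / (\<epsilon> * real a) + 1)"
proof -
  define cross where "cross i = (\<Sum>s\<in>{a..<b}. increment i s * (N j s / (real s - N i s)))" for i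
  define err where "err = 2 * (real b - real a)^2 / (\<epsilon> * real a) + 1"
  have H: "\<bar>N j b - N j a - (\<Sum>i\<in>J-{j}. cross i)\<bar>
      \<le> \<bar>Mart j b - Mart j a\<bar> + leaf_mass b + (\<Sum>s\<in>{a..<b}. leaf_mass s / (\<epsilon> * real s))"
  proof -
    have "(\<Sum>i\<in>J-{j}. cross i) = (\<Sum>s\<in>{a..<b}. \<Sum>i\<in>J-{j}. increment i s * (N j s / (real s - N i s)))"
      unfolding cross_def by (rule sum.swap)
    then show ?thesis using drift_approx[OF a j] unfolding leaf_mass_def increment_def by simp
  qed
  have "\<bar>(\<Sum>i\<in>J-{j}. cross i) - (\<Sum>i\<in>J-{j}. ratio i j a * (N i b - N i a))\<bar>
      \<le> (\<Sum>i\<in>J-{j}. err)"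
    unfolding sum_subtractf[symmetric] cross_def err_def
    by (intro order_trans[OF sum_abs] sum_mono block_cross_term[OF a _ j]) auto
  also have "\<dots> \<le> real d * err"
  proof -
    have "card (J - {j}) \<le> card J" by (rule card_mono) auto
    moreover have "err \<ge> 0" unfolding err_def using eps by simp
    ultimately show ?thesis by (simp add: mult_right_mono)
  qed
  finally show ?thesis using H unfolding err_def by linarith
qed

definition block_error :: "nat \<Rightarrow> nat \<Rightarrow> nat \<Rightarrow> real" where
  "block_error j a b = \<bar>Mart j b - Mart j a\<bar> + leaf_mass b + (\<Sum>s\<in>{a..<b}. leaf_mass s / (\<epsilon> * real s))
        + real d * (2 * (real b - real a)^2 / (\<epsilon> * real a) + 1)"

lemma frac_ge: "t \<ge> T \<Longrightarrow> j \<in> J \<Longrightarrow> frac t j \<ge> \<epsilon>"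
  using N_lower[of t j] T1 unfolding frac_def by (simp add: field_simps)

lemma sum_frac: "t \<ge> T \<Longrightarrow> (\<Sum>j\<in>J. frac t j) = 1 - leaf_mass t / real t"
proof -
  assume t: "t \<ge> T"
  have tp: "real t > 0" using t T1 by simp
  have "(\<Sum>j\<in>J. frac t j) = (\<Sum>j\<in>J. N j t) / real t" unfolding frac_def by (simp add: sum_divide_distrib)
  also have "\<dots> = (real t - leaf_mass t) / real t" unfolding leaf_mass_def by simp
  also have "\<dots> = 1 - leaf_mass t / real t" using tp by (simp add: field_simps)
  finally show ?thesis .
qed

lemma spread_attained: "\<exists>j\<in>J. \<exists>k\<in>J. spread t = frac t j - frac t k"
proof -
  have "Max (frac t ` J) \<in> frac t ` J" "Min (frac t ` J) \<in> frac t ` J" using finite_J J_ne by auto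
  then obtain j k where jk: "j \<in> J" "Max (frac t ` J) = frac t j" "k \<in> J" "Min (frac t ` J) = frac t k" by auto
  then have "spread t = frac t j - frac t k" unfolding spread_def by simp
  then show ?thesis using jk(1,3) by blast
qed

lemma spread_ge: "j \<in> J \<Longrightarrow> k \<in> J \<Longrightarrow> frac t j - frac t k \<le> spread t"
proof -
  assume jk: "j \<in> J" "k \<in> J"
  have "frac t j \<le> Max (frac t ` J)" "Min (frac t ` J) \<le> frac t k" using finite_J jk by auto
  then show ?thesis unfolding spread_def by linarith
qed

lemma spread_nonneg: "spread t \<ge> 0"
proof -
  obtain j where "j \<in> J" using J_ne by blast
  then show ?thesis using spread_ge[of j j t] by simp
qed

definition block_visits :: "nat \<Rightarrow> nat \<Rightarrow> nat \<Rightarrow> real" where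
  "block_visits a b j = (N j b - N j a) / (real b - real a)"

text \<open>The block visit frequencies obey the reinforcement rule in the normalised form required by
  the contraction lemma, with error \<open>block_error / (b - a)\<close>.\<close>
lemma block_visits_rule:
  assumes a: "T < a" "a < b" and j: "j \<in> J"
  shows "\<bar>block_visits a b j - frac a j * (\<Sum>i\<in>J-{j}. block_visits a b i / (1 - frac a i))\<bar>
    \<le> block_error j a b / (real b - real a)"
proof -
  define D where "D = real b - real a"
  have ap: "real a > 0" using a by simp
  have Dp: "D > 0" unfolding D_def using a by simp
  have each_term: "frac a j * (block_visits a b i / (1 - frac a i)) = ratio i j a * (N i b - N i a) / D"
    if "i \<in> J" for i
  proof -
    have "\<epsilon> * real a > 0" using eps ap by simp
    then have g: "real a - N i a > 0" using N_gap[of a i] a that by linarith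
    have bv: "block_visits a b i = (N i b - N i a) / D" unfolding block_visits_def D_def ..
    have "1 - frac a i = (real a - N i a) / real a" unfolding frac_def using ap by (simp add: field_simps)
    then show ?thesis unfolding frac_def bv ratio_def using ap Dp g by (simp add: field_simps)
  qed
  have "frac a j * (\<Sum>i\<in>J-{j}. block_visits a b i / (1 - frac a i)) = (\<Sum>i\<in>J-{j}. ratio i j a * (N i b - N i a)) / D"
    using each_term by (simp add: sum_distrib_left sum_divide_distrib)
  then have "\<bar>block_visits a b j - frac a j * (\<Sum>i\<in>J-{j}. block_visits a b i / (1 - frac a i))\<bar>
      = \<bar>(N j b - N j a) - (\<Sum>i\<in>J-{j}. ratio i j a * (N i b - N i a))\<bar> / D"
    using Dp unfolding block_visits_def D_def by (simp add: diff_divide_distrib[symmetric] abs_divide)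
  also have "\<dots> \<le> block_error j a b / D"
    unfolding block_error_def using block_drift[OF a(1) _ j] a Dp by (intro divide_right_mono) auto
  finally show ?thesis unfolding D_def .
qed

text \<open>One block \<open>[a, a + D)\<close> with controlled errors contracts the spread (via the algebraic
  contraction lemma applied to \<open>\<pi> = frac a\<close> and \<open>\<nu> = block_visits a (a + D)\<close>).\<close>
lemma block_contraction:
  assumes a: "T < a" and D: "D \<ge> 1" and b: "b = a + D"
    and eta: "\<And>j. j \<in> J \<Longrightarrow> block_error j a b \<le> \<eta> * real D"
    and theta: "leaf_mass a / real a \<le> \<theta>"
    and dl: "real D / real a \<le> \<epsilon>^2/4"
    and small1: "real d * \<eta> \<le> 1" and small2: "real d * \<eta> + 2*\<theta>/\<epsilon>^2 \<le> \<epsilon>/2"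
  shows "spread b \<le> spread a * (1 - (real D / real a) * \<epsilon> / 4) + 2 * (real D / real a) * \<eta>"
proof -
  have a1: "1 \<le> a" "T \<le> a" using a T1 by auto
  have ap: "real a > 0" using a1 by simp
  have Dp: "real D > 0" using D by simp
  have ab: "a \<le> b" "a < b" using b D by auto
  have rb: "real b - real a = real D" using b by simp
  define \<nu> where "\<nu> = block_visits a b"
  define \<delta> where "\<delta> = real D / real a"
  have rule: "\<bar>\<nu> j - frac a j * (\<Sum>i\<in>J-{j}. \<nu> i / (1 - frac a i))\<bar> \<le> \<eta>" if j: "j \<in> J" for j
    using block_visits_rule[OF a ab(2) j] eta[OF j] Dp unfolding \<nu>_def rb
    by (smt (verit) divide_right_mono pos_divide_le_eq)
  have nu_nonneg: "\<nu> j \<ge> 0" if "j \<in> J" for j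
    unfolding \<nu>_def block_visits_def rb using N_mono[OF a1(2) ab(1) that] Dp by simp
  have nu_sum: "(\<Sum>j\<in>J. \<nu> j) \<le> 1"
  proof -
    have "leaf_mass a \<le> leaf_mass b" using leaf_mass_mono[OF a1(2) ab(1)] .
    then have "(\<Sum>j\<in>J. N j b - N j a) \<le> real D" unfolding leaf_mass_def using rb by (simp add: sum_subtractf)
    then show ?thesis unfolding \<nu>_def block_visits_def rb using Dp
      by (simp add: sum_divide_distrib[symmetric] divide_le_eq)
  qed
  have pi_sum: "(\<Sum>j\<in>J. frac a j) \<le> 1" "1 - (\<Sum>j\<in>J. frac a j) \<le> \<theta>"
    using sum_frac[OF a1(2)] leaf_mass_nonneg[OF a1(2)] ap theta by simp_all
  have setting: "contraction_setting J (frac a) \<nu> \<epsilon> \<delta> \<eta> \<theta>"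
    by unfold_locales
      (use finite_J J_ne J_other eps frac_ge[OF a1(2)] pi_sum nu_nonneg nu_sum rule ap Dp dl small1 small2 card_J
        in \<open>auto simp: \<delta>_def\<close>)
  have update: "(frac a j + \<delta> * \<nu> j) / (1 + \<delta>) = frac b j" for j
    unfolding frac_def \<nu>_def block_visits_def \<delta>_def rb using ap Dp b by (simp add: field_simps)
  obtain j k where jk: "j \<in> J" "k \<in> J" "spread b = frac b j - frac b k" using spread_attained by blast
  have "frac b j - frac b k \<le> spread a * (1 - \<delta> * \<epsilon> / 4) + 2 * \<delta> * \<eta>"
    using contraction_setting.spread_contraction[OF setting jk(1,2)] unfolding update spread_def by simp
  then show ?thesis using jk(3) unfolding \<delta>_def by simp
qed

text \<open>Two interior vertices have frequency at least \<open>\<epsilon>\<close> each, so \<open>\<epsilon> \<le> 1/2\<close>.\<close>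
lemma eps_le_half: "\<epsilon> \<le> 1/2"
proof -
  have "N 2 T \<le> real T - N 1 T" using N_pair_le[of T 1 2] d2 by auto
  moreover have "N 1 T \<ge> \<epsilon> * real T" "N 2 T \<ge> \<epsilon> * real T" using N_lower[of T 1] N_lower[of T 2] d2 by auto
  ultimately have "2 * \<epsilon> * real T \<le> 1 * real T" by linarith
  moreover have "real T > 0" using T1 by simp
  ultimately show ?thesis by (simp add: mult_le_cancel_right)
qed

definition block_len :: "real \<Rightarrow> nat \<Rightarrow> nat" where "block_len \<delta> a = nat \<lceil>\<delta> * real a\<rceil>"

lemma block_len_bounds: assumes "\<delta> > 0" "1 \<le> \<delta> * real a"
  shows "real (block_len \<delta> a) \<ge> \<delta> * real a" "real (block_len \<delta> a) \<le> \<delta> * real a + 1" "block_len \<delta> a \<ge> 1"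
    "real (block_len \<delta> a) \<le> 2 * \<delta> * real a"
proof -
  have c: "real (block_len \<delta> a) = of_int \<lceil>\<delta> * real a\<rceil>" unfolding block_len_def using assms by simp
  show "real (block_len \<delta> a) \<ge> \<delta> * real a" unfolding c by linarith
  show "real (block_len \<delta> a) \<le> \<delta> * real a + 1" unfolding c by linarith
  then show "real (block_len \<delta> a) \<le> 2 * \<delta> * real a" using assms by linarith
  show "block_len \<delta> a \<ge> 1" using \<open>real (block_len \<delta> a) \<ge> \<delta> * real a\<close> assms by linarith
qed

text \<open>The error rate of a block, made explicit so that it visibly tends to zero as \<open>a \<rightarrow> \<infinity>\<close>.\<close>
definition block_error_rate :: "real \<Rightarrow> nat \<Rightarrow> nat \<Rightarrow> real" where
  "block_error_rate \<delta> j a = (2 * (\<bar>Mart j (a + block_len \<delta> a)\<bar> / real (a + block_len \<delta> a)) + \<bar>Mart j a\<bar> / real a) / \<delta>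
     + (2 * K / \<delta> + 2 * K / \<epsilon>) * real a powr (- \<epsilon>) + real d / (\<delta> * real a) + 2 * real d / (\<epsilon> * real a)"

lemma leaf_mass_powr: assumes "t \<ge> T" shows "leaf_mass t \<le> K * real t * real t powr (- \<epsilon>)"
proof -
  have tp: "real t > 0" using assms T1 by simp
  have "real t powr (1 - \<epsilon>) = real t powr (1 + (- \<epsilon>))" by simp
  also have "\<dots> = real t powr 1 * real t powr (- \<epsilon>)" by (rule powr_add)
  also have "\<dots> = real t * real t powr (- \<epsilon>)" using tp by simp
  finally show ?thesis using leaf_mass_le[OF assms] by (simp add: mult.assoc)
qed

lemma leaf_correction_sum:
  assumes a: "T < a" and b: "a \<le> b"
  shows "(\<Sum>s\<in>{a..<b}. leaf_mass s / (\<epsilon> * real s)) \<le> (real b - real a) * (K / \<epsilon> * real a powr (- \<epsilon>))"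
proof -
  have "(\<Sum>s\<in>{a..<b}. leaf_mass s / (\<epsilon> * real s)) \<le> (\<Sum>s\<in>{a..<b}. K / \<epsilon> * real a powr (- \<epsilon>))"
  proof (intro sum_mono)
    fix s assume s: "s \<in> {a..<b}"
    have sp: "real s > 0" using s a by auto
    have "leaf_mass s \<le> K * real s * real s powr (- \<epsilon>)" using leaf_mass_powr[of s] s a by simp
    then have "leaf_mass s / (\<epsilon> * real s) \<le> K * real s * real s powr (- \<epsilon>) / (\<epsilon> * real s)"
      using eps sp by (intro divide_right_mono) auto
    also have "\<dots> = K / \<epsilon> * real s powr (- \<epsilon>)" using sp eps by (simp add: field_simps)
    also have "\<dots> \<le> K / \<epsilon> * real a powr (- \<epsilon>)"
      using K0 eps s a by (intro mult_left_mono powr_mono2') auto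
    finally show "leaf_mass s / (\<epsilon> * real s) \<le> K / \<epsilon> * real a powr (- \<epsilon>)" .
  qed
  also have "\<dots> = (real b - real a) * (K / \<epsilon> * real a powr (- \<epsilon>))" using b by (simp add: of_nat_diff)
  finally show ?thesis .
qed

lemma block_endpoint_terms:
  assumes a: "T < a" and ab: "a \<le> b" and ba: "real b \<le> 2 * real a"
  shows "\<bar>Mart j b - Mart j a\<bar> \<le> real a * (2 * (\<bar>Mart j b\<bar> / real b) + \<bar>Mart j a\<bar> / real a)"
    and "leaf_mass b \<le> real a * (2 * K * real a powr (- \<epsilon>))"
proof -
  have ap: "real a > 0" and bp: "real b > 0" using a ab by auto
  have "\<bar>Mart j b - Mart j a\<bar> \<le> (\<bar>Mart j b\<bar> / real b) * real b + (\<bar>Mart j a\<bar> / real a) * real a"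
    using ap bp by simp
  also have "\<dots> \<le> (\<bar>Mart j b\<bar> / real b) * (2 * real a) + (\<bar>Mart j a\<bar> / real a) * real a"
    using ba by (intro add_mono mult_left_mono) auto
  finally show "\<bar>Mart j b - Mart j a\<bar> \<le> real a * (2 * (\<bar>Mart j b\<bar> / real b) + \<bar>Mart j a\<bar> / real a)"
    by (simp add: algebra_simps)
  have "leaf_mass b \<le> K * real b * real b powr (- \<epsilon>)" using leaf_mass_powr[of b] a ab by simp
  also have "\<dots> \<le> K * (2 * real a) * real a powr (- \<epsilon>)"
    using K0 ba bp ap ab eps by (intro mult_mono powr_mono2') auto
  finally show "leaf_mass b \<le> real a * (2 * K * real a powr (- \<epsilon>))" by (simp add: algebra_simps)
qed

lemma block_error_bound:
  assumes a: "T < a" and dl: "0 < \<delta>" "\<delta> \<le> 1/2" "1 \<le> \<delta> * real a" and j: "j \<in> J"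
  shows "block_error j a (a + block_len \<delta> a) \<le> (2 * real d * \<delta> / \<epsilon> + block_error_rate \<delta> j a) * real (block_len \<delta> a)"
proof -
  define D where "D = block_len \<delta> a"
  define b where "b = a + D"
  have Db: "real D \<ge> \<delta> * real a" "real D \<le> \<delta> * real a + 1" "D \<ge> 1" "real D \<le> 2 * \<delta> * real a"
    using block_len_bounds[OF dl(1) dl(3)] unfolding D_def by auto
  have ap: "real a > 0" using a by simp
  have Dp: "real D > 0" using Db by simp
  have "(2 * \<delta>) * real a \<le> 1 * real a" using dl ap by (intro mult_right_mono) auto
  then have ba: "real b \<le> 2 * real a" using Db unfolding b_def by simp
  have aD: "real a \<le> real D / \<delta>" using Db dl by (simp add: field_simps)
  have rb: "real b - real a = real D" unfolding b_def by simp
  define m where "m t = \<bar>Mart j t\<bar> / real t" for t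
  have ab: "a \<le> b" unfolding b_def by simp
  have mart_term: "\<bar>Mart j b - Mart j a\<bar> \<le> real D * ((2 * m b + m a) / \<delta>)"
  proof -
    have "\<bar>Mart j b - Mart j a\<bar> \<le> real a * (2 * m b + m a)" using block_endpoint_terms(1)[OF a ab ba] unfolding m_def .
    also have "\<dots> \<le> (real D / \<delta>) * (2 * m b + m a)" using aD unfolding m_def by (intro mult_right_mono) auto
    finally show ?thesis by (simp add: field_simps)
  qed
  have leaf_end_term: "leaf_mass b \<le> real D * (2 * K / \<delta> * real a powr (- \<epsilon>))"
  proof -
    have "leaf_mass b \<le> real a * (2 * K * real a powr (- \<epsilon>))" using block_endpoint_terms(2)[OF a ab ba] .
    also have "\<dots> \<le> (real D / \<delta>) * (2 * K * real a powr (- \<epsilon>))" using aD K0 by (intro mult_right_mono) auto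
    finally show ?thesis by (simp add: field_simps)
  qed
  have leaf_sum_term: "(\<Sum>s\<in>{a..<b}. leaf_mass s / (\<epsilon> * real s)) \<le> real D * (2 * K / \<epsilon> * real a powr (- \<epsilon>))"
  proof -
    have "(\<Sum>s\<in>{a..<b}. leaf_mass s / (\<epsilon> * real s)) \<le> real D * (K / \<epsilon> * real a powr (- \<epsilon>))"
      using leaf_correction_sum[OF a, of b] rb unfolding b_def by simp
    also have "\<dots> \<le> real D * (2 * K / \<epsilon> * real a powr (- \<epsilon>))"
      using Dp K0 eps by (intro mult_left_mono mult_right_mono) (auto simp: field_simps)
    finally show ?thesis .
  qed
  have unit_term: "real d * 1 \<le> real D * (real d / (\<delta> * real a))"
  proof -
    have "(\<delta> * real a) * (real d / (\<delta> * real a)) \<le> real D * (real d / (\<delta> * real a))"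
      using Db(1) dl ap by (intro mult_right_mono) auto
    moreover have "(\<delta> * real a) * (real d / (\<delta> * real a)) = real d" using dl ap by simp
    ultimately show ?thesis by simp
  qed
  have freeze_term: "real d * (2 * (real b - real a)^2 / (\<epsilon> * real a)) \<le> real D * (2 * real d * \<delta> / \<epsilon> + 2 * real d / (\<epsilon> * real a))"
  proof -
    have "real d * (2 * (real b - real a)^2 / (\<epsilon> * real a)) = real D * (2 * real d * real D / (\<epsilon> * real a))"
      unfolding rb by (simp add: power2_eq_square)
    also have "\<dots> \<le> real D * (2 * real d * (\<delta> * real a + 1) / (\<epsilon> * real a))"
      using Dp Db eps ap by (intro mult_left_mono divide_right_mono) auto
    also have "\<dots> = real D * (2 * real d * \<delta> / \<epsilon> + 2 * real d / (\<epsilon> * real a))"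
      using ap eps by (simp add: field_simps)
    finally show ?thesis .
  qed
  have "block_error j a b \<le> real D * ((2 * m b + m a) / \<delta>) + real D * (2 * K / \<delta> * real a powr (- \<epsilon>))
      + real D * (2 * K / \<epsilon> * real a powr (- \<epsilon>)) + real D * (real d / (\<delta> * real a))
      + real D * (2 * real d * \<delta> / \<epsilon> + 2 * real d / (\<epsilon> * real a))"
    unfolding block_error_def using mart_term leaf_end_term leaf_sum_term unit_term freeze_term by (simp add: algebra_simps)
  also have "\<dots> = (2 * real d * \<delta> / \<epsilon> + block_error_rate \<delta> j a) * real D"
    unfolding block_error_rate_def m_def b_def D_def by (simp add: algebra_simps)
  finally show ?thesis unfolding b_def D_def .
qed

lemma block_error_rate_tendsto: assumes "\<delta> > 0" "j \<in> J" shows "(\<lambda>a. block_error_rate \<delta> j a) \<longlonglongrightarrow> 0"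
proof -
  have m: "(\<lambda>t. \<bar>Mart j t\<bar> / real t) \<longlonglongrightarrow> 0"
  proof -
    have "(\<lambda>t. \<bar>Mart j t / real t\<bar>) \<longlonglongrightarrow> \<bar>0\<bar>" by (intro tendsto_rabs mart_small assms)
    then show ?thesis by (simp add: abs_divide)
  qed
  have f: "filterlim (\<lambda>a. a + block_len \<delta> a) at_top sequentially"
    by (rule filterlim_at_top_mono[OF filterlim_ident]) auto
  have mb: "(\<lambda>a. \<bar>Mart j (a + block_len \<delta> a)\<bar> / real (a + block_len \<delta> a)) \<longlonglongrightarrow> 0"
    using filterlim_compose[OF m f] by (simp add: o_def)
  have pw: "(\<lambda>a. real a powr (- \<epsilon>)) \<longlonglongrightarrow> 0"
    using eps by (intro tendsto_neg_powr filterlim_real_sequentially) auto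
  have inv: "(\<lambda>a. inverse (real a)) \<longlonglongrightarrow> 0" by (rule lim_inverse_n)
  have e: "block_error_rate \<delta> j = (\<lambda>a. (2 * (\<bar>Mart j (a + block_len \<delta> a)\<bar> / real (a + block_len \<delta> a)) + \<bar>Mart j a\<bar> / real a) / \<delta>
     + (2 * K / \<delta> + 2 * K / \<epsilon>) * real a powr (- \<epsilon>) + (real d / \<delta>) * inverse (real a) + (2 * real d / \<epsilon>) * inverse (real a))"
    unfolding block_error_rate_def by (intro ext) (simp add: field_simps)
  have "(\<lambda>a. (2 * (\<bar>Mart j (a + block_len \<delta> a)\<bar> / real (a + block_len \<delta> a)) + \<bar>Mart j a\<bar> / real a) / \<delta>
     + (2 * K / \<delta> + 2 * K / \<epsilon>) * real a powr (- \<epsilon>) + (real d / \<delta>) * inverse (real a) + (2 * real d / \<epsilon>) * inverse (real a))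
     \<longlonglongrightarrow> (2 * 0 + 0) / \<delta> + (2 * K / \<delta> + 2 * K / \<epsilon>) * 0 + (real d / \<delta>) * 0 + (2 * real d / \<epsilon>) * 0"
    by (intro tendsto_intros mb m pw inv) (use assms in auto)
  then show ?thesis unfolding e by simp
qed

definition good_start :: "real \<Rightarrow> real \<Rightarrow> nat \<Rightarrow> bool" where
  "good_start \<delta> \<gamma> a \<longleftrightarrow> T < a \<and> 1 \<le> \<delta> * real a \<and> leaf_mass a / real a \<le> \<gamma>
     \<and> (\<forall>j\<in>J. block_error j a (a + block_len \<delta> a) \<le> (2 * real d * \<delta> / \<epsilon> + \<gamma>) * real (block_len \<delta> a))"

lemma eventually_good_start: assumes "0 < \<delta>" "\<delta> \<le> 1/2" "\<gamma> > 0"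
  shows "eventually (good_start \<delta> \<gamma>) sequentially"
proof -
  have e1: "eventually (\<lambda>a. T < a) sequentially" by (rule eventually_gt_at_top)
  have e2: "eventually (\<lambda>a. 1 \<le> \<delta> * real a) sequentially"
  proof -
    obtain n :: nat where "1 / \<delta> < real n" using reals_Archimedean2 by blast
    then have "\<forall>a\<ge>n. 1 \<le> \<delta> * real a" using assms by (auto simp: field_simps intro: order_trans[of _ "\<delta> * real n"])
    then show ?thesis unfolding eventually_sequentially by blast
  qed
  have e3: "eventually (\<lambda>a. leaf_mass a / real a \<le> \<gamma>) sequentially"
  proof -
    have pw: "(\<lambda>a. K * real a powr (- \<epsilon>)) \<longlonglongrightarrow> K * 0"
      using eps by (intro tendsto_mult tendsto_const tendsto_neg_powr filterlim_real_sequentially) auto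
    then have "eventually (\<lambda>a. K * real a powr (- \<epsilon>) < \<gamma>) sequentially"
      using assms by (simp add: order_tendsto_iff)
    then show ?thesis using eventually_gt_at_top[of T]
    proof eventually_elim
      case (elim a)
      have ap: "real a > 0" using elim T1 by simp
      have "leaf_mass a / real a \<le> K * real a * real a powr (- \<epsilon>) / real a"
        using leaf_mass_powr[of a] elim ap by (intro divide_right_mono) auto
      also have "\<dots> = K * real a powr (- \<epsilon>)" using ap by simp
      finally show ?case using elim by simp
    qed
  qed
  have e4: "eventually (\<lambda>a. \<forall>j\<in>J. block_error_rate \<delta> j a \<le> \<gamma>) sequentially"
  proof (rule eventually_ball_finite[OF finite_J], intro ballI)
    fix j assume j: "j \<in> J"
    have "eventually (\<lambda>a. block_error_rate \<delta> j a < \<gamma>) sequentially"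
      using block_error_rate_tendsto[OF assms(1) j] assms by (simp add: order_tendsto_iff)
    then show "eventually (\<lambda>a. block_error_rate \<delta> j a \<le> \<gamma>) sequentially" by (rule eventually_mono) auto
  qed
  show ?thesis using e1 e2 e3 e4
  proof eventually_elim
    case (elim a)
    have "\<forall>j\<in>J. block_error j a (a + block_len \<delta> a) \<le> (2 * real d * \<delta> / \<epsilon> + \<gamma>) * real (block_len \<delta> a)"
    proof
      fix j assume j: "j \<in> J"
      have "block_error j a (a + block_len \<delta> a) \<le> (2 * real d * \<delta> / \<epsilon> + block_error_rate \<delta> j a) * real (block_len \<delta> a)"
        using block_error_bound[OF _ assms(1,2) _ j] elim by auto
      also have "\<dots> \<le> (2 * real d * \<delta> / \<epsilon> + \<gamma>) * real (block_len \<delta> a)"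
        using elim j by (intro mult_right_mono) auto
      finally show "block_error j a (a + block_len \<delta> a) \<le> (2 * real d * \<delta> / \<epsilon> + \<gamma>) * real (block_len \<delta> a)" .
    qed
    then show ?case unfolding good_start_def using elim by auto
  qed
qed

lemma frac_interp:
  assumes a: "T \<le> a" "1 \<le> a" "a \<le> t" and j: "j \<in> J"
  shows "\<bar>frac t j - frac a j\<bar> \<le> 2 * (real t - real a) / real a"
proof -
  define x where "x = N j t"
  define x' where "x' = N j a"
  have ap: "real a > 0" using a by simp
  have tp: "real t > 0" using a by simp
  have xx: "\<bar>x - x'\<bar> \<le> real t - real a" using N_mono[OF a(1) a(3) j] unfolding x_def x'_def by auto
  have x'0: "0 \<le> x'" "x' \<le> real a"
  proof -
    show "0 \<le> x'" unfolding x'_def using N_nonneg[OF a(1) j] .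
    have "x' \<le> (\<Sum>k\<in>J. N k a)" unfolding x'_def using j N_nonneg[OF a(1)]
      by (intro member_le_sum) auto
    then show "x' \<le> real a" using N_sum_le[OF a(1)] by simp
  qed
  have ta: "real t - real a \<ge> 0" using a by simp
  have eq: "x / real t - x' / real a = ((x - x') * real a - x' * (real t - real a)) / (real t * real a)"
    using ap tp by (simp add: field_simps)
  have num: "\<bar>(x - x') * real a - x' * (real t - real a)\<bar> \<le> 2 * (real t - real a) * real a"
  proof -
    have e1: "\<bar>(x - x') * real a\<bar> = \<bar>x - x'\<bar> * real a" using ap by (simp add: abs_mult)
    have e2: "\<bar>x' * (real t - real a)\<bar> = x' * (real t - real a)" using x'0 ta by (simp add: abs_mult)
    have "\<bar>x - x'\<bar> * real a \<le> (real t - real a) * real a" using xx ap by (intro mult_right_mono) auto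
    moreover have "x' * (real t - real a) \<le> real a * (real t - real a)" using x'0 ta by (intro mult_right_mono) auto
    ultimately show ?thesis using abs_triangle_ineq4[of "(x - x') * real a" "x' * (real t - real a)"] e1 e2
      by (simp add: algebra_simps)
  qed
  have "\<bar>frac t j - frac a j\<bar> = \<bar>(x - x') * real a - x' * (real t - real a)\<bar> / (real t * real a)"
    unfolding frac_def x_def[symmetric] x'_def[symmetric] eq using ap tp by (simp add: abs_divide)
  also have "\<dots> \<le> 2 * (real t - real a) * real a / (real t * real a)"
    using num ap tp by (intro divide_right_mono) auto
  also have "\<dots> = 2 * (real t - real a) / real t" using ap by simp
  also have "\<dots> \<le> 2 * (real t - real a) / real a" using ta ap a by (intro divide_left_mono) auto
  finally show ?thesis .
qed

lemma spread_interp: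
  assumes a: "T \<le> a" "1 \<le> a" "a \<le> t"
  shows "spread t \<le> spread a + 4 * (real t - real a) / real a"
proof -
  obtain j k where jk: "j \<in> J" "k \<in> J" "spread t = frac t j - frac t k" using spread_attained by blast
  have "frac t j \<le> frac a j + 2 * (real t - real a) / real a" using frac_interp[OF a jk(1)] by linarith
  moreover have "frac a k - 2 * (real t - real a) / real a \<le> frac t k" using frac_interp[OF a jk(2)] by linarith
  moreover have "frac a j - frac a k \<le> spread a" using spread_ge[OF jk(1,2)] .
  ultimately show ?thesis using jk(3) by linarith
qed

definition admissible :: "real \<Rightarrow> real \<Rightarrow> bool" where
  "admissible \<delta> \<gamma> \<longleftrightarrow> 0 < \<delta> \<and> \<delta> \<le> \<epsilon>^2/8 \<and> 2 * real d^2 * \<delta> / \<epsilon> \<le> \<epsilon>/4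
     \<and> 0 < \<gamma> \<and> (real d + 2 / \<epsilon>^2) * \<gamma> \<le> \<epsilon>/4"

lemma spread_block_step:
  assumes adm: "admissible \<delta> \<gamma>" and good: "good_start \<delta> \<gamma> a"
  defines "\<eta> \<equiv> 2 * real d * \<delta> / \<epsilon> + \<gamma>"
  shows "spread (a + block_len \<delta> a) \<le> (1 - \<delta> * \<epsilon> / 4) * spread a + 4 * \<delta> * \<eta>"
proof -
  have \<delta>: "0 < \<delta>" "\<delta> \<le> \<epsilon>^2/8" "2 * real d^2 * \<delta> / \<epsilon> \<le> \<epsilon>/4"
    and \<gamma>: "0 < \<gamma>" "(real d + 2 / \<epsilon>^2) * \<gamma> \<le> \<epsilon>/4" using adm unfolding admissible_def by auto
  have a: "T < a" "1 \<le> \<delta> * real a" "leaf_mass a / real a \<le> \<gamma>"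
    "\<And>j. j \<in> J \<Longrightarrow> block_error j a (a + block_len \<delta> a) \<le> \<eta> * real (block_len \<delta> a)"
    using good unfolding good_start_def \<eta>_def by (auto simp: mult.commute)
  define D where "D = block_len \<delta> a"
  have DB: "real D \<ge> \<delta> * real a" "D \<ge> 1" "real D \<le> 2 * \<delta> * real a"
    using block_len_bounds[OF \<delta>(1) a(2)] unfolding D_def by auto
  have ap: "real a > 0" using a(1) by simp
  define \<delta>' where "\<delta>' = real D / real a"
  have \<delta>'_bounds: "\<delta> \<le> \<delta>'" "\<delta>' \<le> 2 * \<delta>" unfolding \<delta>'_def using DB ap by (simp_all add: field_simps)
  have eta0: "\<eta> \<ge> 0" unfolding \<eta>_def using \<delta> \<gamma> eps by simp
  have d_eta: "real d * \<eta> + 2 * \<gamma> / \<epsilon>^2 \<le> \<epsilon>/2"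
  proof -
    have "real d * \<eta> = 2 * real d^2 * \<delta> / \<epsilon> + real d * \<gamma>" unfolding \<eta>_def by (simp add: power2_eq_square algebra_simps)
    moreover have "real d * \<gamma> + 2 * \<gamma> / \<epsilon>^2 \<le> \<epsilon>/4" using \<gamma>(2) by (simp add: algebra_simps)
    ultimately show ?thesis using \<delta>(3) by linarith
  qed
  have B: "spread (a + D) \<le> spread a * (1 - \<delta>' * \<epsilon> / 4) + 2 * \<delta>' * \<eta>"
    unfolding \<delta>'_def
  proof (rule block_contraction[OF a(1) DB(2) refl])
    show "block_error j a (a + D) \<le> \<eta> * real D" if "j \<in> J" for j using a(4)[OF that] unfolding D_def .
    show "leaf_mass a / real a \<le> \<gamma>" using a(3) .
    show "real D / real a \<le> \<epsilon>^2/4" using \<delta>'_bounds \<delta>(2) unfolding \<delta>'_def by linarith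
    have "2 * \<gamma> / \<epsilon>^2 \<ge> 0" using \<gamma> by simp
    then show "real d * \<eta> \<le> 1" using d_eta eps_le_half by linarith
    show "real d * \<eta> + 2 * \<gamma> / \<epsilon>^2 \<le> \<epsilon>/2" using d_eta .
  qed
  have "spread a * (1 - \<delta>' * \<epsilon> / 4) \<le> spread a * (1 - \<delta> * \<epsilon> / 4)"
    using spread_nonneg[of a] \<delta>'_bounds eps by (intro mult_left_mono) (auto intro: mult_right_mono)
  moreover have "(2 * \<delta>') * \<eta> \<le> (4 * \<delta>) * \<eta>" using \<delta>'_bounds eta0 by (intro mult_right_mono) auto
  ultimately show ?thesis using B unfolding D_def by (simp add: algebra_simps)
qed

lemma eventually_spread_le:
  assumes adm: "admissible \<delta> \<gamma>"
  defines "\<eta> \<equiv> 2 * real d * \<delta> / \<epsilon> + \<gamma>"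
  shows "eventually (\<lambda>t. spread t \<le> 16 * \<eta> / \<epsilon> + \<gamma> + 8 * \<delta>) sequentially"
proof -
  have \<delta>: "0 < \<delta>" "\<delta> \<le> \<epsilon>^2/8" and \<gamma>: "0 < \<gamma>" using adm unfolding admissible_def by auto
  have "\<epsilon>^2 \<le> (1/2)^2" using eps eps_le_half by (intro power_mono) auto
  then have \<delta>_half: "\<delta> \<le> 1/2" using \<delta>(2) by (simp add: power2_eq_square)
  obtain A where A: "\<And>a. a \<ge> A \<Longrightarrow> good_start \<delta> \<gamma> a"
    using eventually_good_start[OF \<delta>(1) \<delta>_half \<gamma>] unfolding eventually_sequentially by blast
  define as where "as = rec_nat A (\<lambda>_ a. a + block_len \<delta> a)"
  have as0: "as 0 = A" and asS: "as (Suc k) = as k + block_len \<delta> (as k)" for k unfolding as_def by simp_all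
  have good: "good_start \<delta> \<gamma> (as k)" for k
    by (rule A) (induction k, auto simp: asS as0)
  then have starts: "T < as k" "1 \<le> \<delta> * real (as k)" for k unfolding good_start_def by auto
  have DB: "block_len \<delta> (as k) \<ge> 1" "real (block_len \<delta> (as k)) \<le> 2 * \<delta> * real (as k)" for k
    using block_len_bounds[OF \<delta>(1) starts(2)[of k]] by auto
  have inc: "as k < as (Suc k)" for k using DB(1)[of k] by (simp add: asS)
  have step: "spread (as (Suc k)) \<le> (1 - \<delta> * \<epsilon> / 4) * spread (as k) + 4 * \<delta> * \<eta>" for k
    unfolding asS \<eta>_def by (rule spread_block_step[OF adm good])
  have "\<delta> * \<epsilon> \<le> 1 * 1" using \<delta> \<delta>_half eps eps_le_half by (intro mult_mono) auto
  then have rho: "0 < \<delta> * \<epsilon> / 4" "\<delta> * \<epsilon> / 4 \<le> 1" using \<delta> eps by auto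
  obtain K0 where K0: "\<And>k. k \<ge> K0 \<Longrightarrow> spread (as k) \<le> 4 * \<delta> * \<eta> / (\<delta> * \<epsilon> / 4) + \<gamma>"
    using linear_recursion_bound[of "\<delta> * \<epsilon> / 4" "\<lambda>k. spread (as k)" "4 * \<delta> * \<eta>" \<gamma>, OF rho step \<gamma>] by blast
  have val: "4 * \<delta> * \<eta> / (\<delta> * \<epsilon> / 4) = 16 * \<eta> / \<epsilon>" using \<delta> eps by (simp add: field_simps)
  show ?thesis unfolding eventually_sequentially
  proof (intro exI allI impI)
    fix t assume t: "t \<ge> as K0"
    obtain k where k: "k \<ge> K0" "as k \<le> t" "t < as (Suc k)" using find_block[OF inc t] by blast
    have a1: "T \<le> as k" "1 \<le> as k" using starts(1)[of k] T1 by auto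
    have "spread t \<le> spread (as k) + 4 * (real t - real (as k)) / real (as k)" by (rule spread_interp[OF a1 k(2)])
    also have "4 * (real t - real (as k)) / real (as k) \<le> 8 * \<delta>"
    proof -
      have "real t - real (as k) \<le> real (block_len \<delta> (as k))" using k(3) unfolding asS by simp
      also have "\<dots> \<le> 2 * \<delta> * real (as k)" using DB(2) .
      finally show ?thesis using a1 by (simp add: field_simps)
    qed
    finally show "spread t \<le> 16 * \<eta> / \<epsilon> + \<gamma> + 8 * \<delta>" using K0[OF k(1)] val by linarith
  qed
qed

lemma eventually_spread_small: assumes tau: "\<tau> > 0" shows "eventually (\<lambda>t. spread t \<le> \<tau>) sequentially"
proof -
  have dpos: "real d \<ge> 2" using d2 by simp
  have e2: "\<epsilon>^2 > 0" using eps by simp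
  define c\<delta> where "c\<delta> = 32 * real d / \<epsilon>^2 + 8"
  define c\<gamma> where "c\<gamma> = 16 / \<epsilon> + 1"
  define \<delta> where "\<delta> = min (\<epsilon>^2 / (8 * real d^2)) (\<tau> / (2 * c\<delta>))"
  define \<gamma> where "\<gamma> = min (\<epsilon> / (4 * (real d + 2 / \<epsilon>^2))) (\<tau> / (2 * c\<gamma>))"
  have pos: "c\<delta> > 0" "c\<gamma> > 0" "4 * (real d + 2 / \<epsilon>^2) > 0"
    unfolding c\<delta>_def c\<gamma>_def using e2 dpos eps by (simp_all add: add_pos_pos)
  have \<delta>0: "\<delta> > 0" unfolding \<delta>_def using e2 dpos tau pos by simp
  have \<delta>_d: "\<delta> \<le> \<epsilon>^2 / (8 * real d^2)" unfolding \<delta>_def by simp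
  have "real d * real d \<ge> 2 * 2" using dpos by (intro mult_mono) auto
  then have "\<epsilon>^2 / (8 * real d^2) \<le> \<epsilon>^2 / 8"
    using e2 by (intro divide_left_mono) (auto simp: power2_eq_square)
  then have \<delta>1: "\<delta> \<le> \<epsilon>^2/8" using \<delta>_d by linarith
  have "8 * real d^2 * \<delta> \<le> \<epsilon>^2" using \<delta>_d dpos by (simp add: field_simps)
  then have \<delta>2: "2 * real d^2 * \<delta> / \<epsilon> \<le> \<epsilon>/4" using eps by (simp add: field_simps power2_eq_square)
  have \<gamma>0: "\<gamma> > 0" unfolding \<gamma>_def using eps pos tau by simp
  have "\<gamma> \<le> \<epsilon> / (4 * (real d + 2 / \<epsilon>^2))" unfolding \<gamma>_def by simp
  then have \<gamma>1: "(real d + 2 / \<epsilon>^2) * \<gamma> \<le> \<epsilon>/4" using pos(3) by (simp add: field_simps)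
  have adm: "admissible \<delta> \<gamma>" unfolding admissible_def using \<delta>0 \<delta>1 \<delta>2 \<gamma>0 \<gamma>1 by blast
  have "\<delta> \<le> \<tau> / (2 * c\<delta>)" "\<gamma> \<le> \<tau> / (2 * c\<gamma>)" unfolding \<delta>_def \<gamma>_def by simp_all
  then have "c\<delta> * \<delta> \<le> \<tau> / 2" "c\<gamma> * \<gamma> \<le> \<tau> / 2" using pos by (simp_all add: field_simps)
  moreover have "16 * (2 * real d * \<delta> / \<epsilon> + \<gamma>) / \<epsilon> + \<gamma> + 8 * \<delta> = c\<delta> * \<delta> + c\<gamma> * \<gamma>"
    unfolding c\<delta>_def c\<gamma>_def using eps by (simp add: field_simps power2_eq_square)
  ultimately show ?thesis using eventually_spread_le[OF adm] by (auto elim: eventually_mono)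
qed

text \<open>Conclusion: the frequencies converge to \<open>1/d\<close>, since the spread and the leaf mass fraction vanish.\<close>
lemma frac_tendsto: assumes j: "j \<in> J" shows "(\<lambda>t. N j t / real t) \<longlonglongrightarrow> 1 / real d"
proof (rule LIMSEQ_I)
  fix e :: real assume e: "e > 0"
  have dpos: "real d \<ge> 2" using d2 by simp
  have bnd: "\<bar>frac t j - 1 / real d\<bar> \<le> spread t + leaf_mass t / real t" if t: "t \<ge> T" for t
  proof -
    have tp: "real t > 0" using t T1 by simp
    have s: "(\<Sum>k\<in>J. frac t j - frac t k) = real d * frac t j - (1 - leaf_mass t / real t)"
      using sum_frac[OF t] by (simp add: sum_subtractf card_J)
    have "\<bar>\<Sum>k\<in>J. frac t j - frac t k\<bar> \<le> (\<Sum>k\<in>J. \<bar>frac t j - frac t k\<bar>)" by (rule sum_abs)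
    also have "\<dots> \<le> (\<Sum>k\<in>J. spread t)"
    proof (intro sum_mono)
      fix k assume k: "k \<in> J"
      show "\<bar>frac t j - frac t k\<bar> \<le> spread t" using spread_ge[OF j k, of t] spread_ge[OF k j, of t] by linarith
    qed
    also have "\<dots> = real d * spread t" by simp
    finally have A: "\<bar>real d * frac t j - 1 + leaf_mass t / real t\<bar> \<le> real d * spread t" using s by simp
    have Lt: "leaf_mass t / real t \<ge> 0" using leaf_mass_nonneg[OF t] tp by simp
    have "\<bar>real d * frac t j - 1\<bar> \<le> real d * spread t + leaf_mass t / real t" using A Lt by linarith
    also have "\<dots> \<le> real d * spread t + real d * (leaf_mass t / real t)"
    proof -
      have "1 * (leaf_mass t / real t) \<le> real d * (leaf_mass t / real t)" using Lt dpos by (intro mult_right_mono) auto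
      then show ?thesis by simp
    qed
    finally have B: "\<bar>real d * frac t j - 1\<bar> \<le> real d * (spread t + leaf_mass t / real t)" by (simp add: algebra_simps)
    have "\<bar>frac t j - 1 / real d\<bar> = \<bar>real d * frac t j - 1\<bar> / real d" using dpos by (simp add: field_simps abs_divide)
    also have "\<dots> \<le> real d * (spread t + leaf_mass t / real t) / real d" using B dpos by (intro divide_right_mono) auto
    also have "\<dots> = spread t + leaf_mass t / real t" using dpos by simp
    finally show ?thesis .
  qed
  have ev1: "eventually (\<lambda>t. spread t \<le> e/3) sequentially" using eventually_spread_small[of "e/3"] e by simp
  have ev2: "eventually (\<lambda>t. leaf_mass t / real t \<le> e/3) sequentially"
    using eventually_good_start[of "1/2" "e/3"] e unfolding good_start_def by (auto elim: eventually_mono)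
  have ev3: "eventually (\<lambda>t. t \<ge> T) sequentially" by (rule eventually_ge_at_top)
  have "eventually (\<lambda>t. norm (N j t / real t - 1 / real d) < e) sequentially"
    using ev1 ev2 ev3
  proof eventually_elim
    case (elim t)
    have "\<bar>frac t j - 1 / real d\<bar> \<le> e/3 + e/3" using bnd[OF elim(3)] elim(1,2) by linarith
    then show ?case using e unfolding frac_def by simp
  qed
  then show "\<exists>no. \<forall>n\<ge>no. norm (N j n / real n - 1 / real d) < e" unfolding eventually_sequentially by blast
qed

lemma leaf_mass_frac_tendsto: "(\<lambda>t. leaf_mass t / real t) \<longlonglongrightarrow> 0"
proof (rule LIMSEQ_I)
  fix e :: real assume e: "e > 0"
  have "eventually (\<lambda>t. leaf_mass t / real t \<le> e/2) sequentially"
    using eventually_good_start[of "1/2" "e/2"] e unfolding good_start_def by (auto elim: eventually_mono)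
  moreover have "eventually (\<lambda>t. t \<ge> T) sequentially" by (rule eventually_ge_at_top)
  ultimately have "eventually (\<lambda>t. norm (leaf_mass t / real t - 0) < e) sequentially"
  proof eventually_elim
    case (elim t)
    have l0: "leaf_mass t \<ge> 0" using leaf_mass_nonneg[OF elim(2)] .
    have "norm (leaf_mass t / real t - 0) = leaf_mass t / real t" using l0 by simp
    then show ?case using elim(1) e by linarith
  qed
  then show "\<exists>no. \<forall>n\<ge>no. norm (leaf_mass n / real n - 0) < e" unfolding eventually_sequentially by blast
qed
end

locale vrrw_path =
  fixes d :: nat and r :: "nat \<Rightarrow> nat" and z0 :: "vtx \<Rightarrow> nat" and h :: "nat \<Rightarrow> vtx" and \<epsilon> :: real and T :: nat
  assumes d2: "d \<ge> 2" and z0pos: "\<forall>v\<in>Vd d r. z0 v > 0"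
    and path_in_Vd: "\<And>s. s \<ge> tzero d r z0 \<Longrightarrow> h s \<in> Vd d r"
    and eps: "\<epsilon> > 0" and T_ge_T0: "T \<ge> tzero d r z0"
    and interior_lower: "\<And>t i. t \<ge> T \<Longrightarrow> i \<in> {1..d} \<Longrightarrow> real (Zp d r z0 h t (Inl i)) / real t \<ge> \<epsilon>"
    and leaf_upper: "\<And>t i. t \<ge> T \<Longrightarrow> i \<in> {1..d} \<Longrightarrow> (\<Sum>k\<in>{1..r i}. real (Zp d r z0 h t (Inr (i,k)))) / real t \<le> real t powr (- \<epsilon>)"
    and mart_lln: "\<And>j. j \<in> {1..d} \<Longrightarrow> (\<lambda>t. (\<Sum>s\<in>{tzero d r z0..<t}. ((if h (Suc s) = Inl j then 1 else 0) - trans_prob d r z0 h s (Inl j))) / real t) \<longlonglongrightarrow> 0"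
begin

abbreviation "T0 \<equiv> tzero d r z0"
abbreviation "V \<equiv> Vd d r"
abbreviation "J \<equiv> {1..d}"
definition Zr :: "nat \<Rightarrow> vtx \<Rightarrow> real" where "Zr t v = real (Zp d r z0 h t v)"
definition Nint :: "nat \<Rightarrow> nat \<Rightarrow> real" where "Nint j t = Zr t (Inl j)"
definition Lmass :: "nat \<Rightarrow> real" where "Lmass t = (\<Sum>v\<in>leaves d r. Zr t v)"
definition Mart :: "nat \<Rightarrow> nat \<Rightarrow> real" where
  "Mart j t = (\<Sum>s\<in>{T0..<t}. ((if h (Suc s) = Inl j then 1 else 0) - trans_prob d r z0 h s (Inl j)))"

lemma Zr_nonneg: "Zr t v \<ge> 0" unfolding Zr_def by simp

lemma Zp_Suc: assumes "t \<ge> T0" shows "Zp d r z0 h (Suc t) v = Zp d r z0 h t v + (if h (Suc t) = v then 1 else 0)"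
proof -
  have e: "{s \<in> {T0<..Suc t}. h s = v} = (if h (Suc t) = v then insert (Suc t) {s \<in> {T0<..t}. h s = v} else {s \<in> {T0<..t}. h s = v})"
    using assms by (auto simp: le_Suc_eq)
  show ?thesis unfolding Zp_def e by auto
qed

lemma Zr_Suc: "t \<ge> T0 \<Longrightarrow> Zr (Suc t) v = Zr t v + (if h (Suc t) = v then 1 else 0)"
  unfolding Zr_def using Zp_Suc by simp

lemma sum_Zr: "t \<ge> T0 \<Longrightarrow> (\<Sum>v\<in>V. Zr t v) = real t"
proof (induction t rule: dec_induct)
  case base
  have "Zr T0 v = real (z0 v)" for v unfolding Zr_def Zp_def by simp
  then show ?case unfolding tzero_def by simp
next
  case (step t)
  have "(\<Sum>v\<in>V. Zr (Suc t) v) = (\<Sum>v\<in>V. Zr t v) + (\<Sum>v\<in>V. (if h (Suc t) = v then 1 else 0))"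
    using step(1) by (simp add: Zr_Suc sum.distrib)
  also have "(\<Sum>v\<in>V. (if h (Suc t) = v then 1 else 0 :: real)) = 1"
    using path_in_Vd[of "Suc t"] step(1) by (simp add: finite_Vd sum.delta)
  finally show ?case using step(3) by simp
qed

lemma Zr_split: "t \<ge> T0 \<Longrightarrow> (\<Sum>j\<in>J. Nint j t) + Lmass t = real t"
  using sum_Zr[of t] sum_Vd[where f="Zr t" and d=d and r=r] unfolding Nint_def Lmass_def by simp

lemma Lmass_nonneg: "Lmass t \<ge> 0" unfolding Lmass_def by (intro sum_nonneg) (simp add: Zr_nonneg)

lemma Lmass_Suc: "t \<ge> T0 \<Longrightarrow> Lmass (Suc t) = Lmass t + (if h (Suc t) \<in> leaves d r then 1 else 0)"
  unfolding Lmass_def using finite_leaves by (simp add: Zr_Suc sum.distrib sum.delta)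

lemma Nint_Suc: "t \<ge> T0 \<Longrightarrow> Nint j (Suc t) = Nint j t + (if h (Suc t) = Inl j then 1 else 0)"
  unfolding Nint_def by (simp add: Zr_Suc)

lemma Lmass_mono: "T0 \<le> a \<Longrightarrow> a \<le> t \<Longrightarrow> Lmass a \<le> Lmass t"
proof -
  assume a: "T0 \<le> a" "a \<le> t"
  show ?thesis using a(2)
  proof (induction t rule: dec_induct)
    case base then show ?case by simp
  next
    case (step t) then show ?case using Lmass_Suc[of t] a by simp
  qed
qed

lemma leaf_visits_le: assumes "T0 < a" "a \<le> t"
  shows "(\<Sum>s\<in>{a..<t}. (if h s \<in> leaves d r then 1 else 0 :: real)) \<le> Lmass t"
proof -
  have "(\<Sum>s\<in>{a..<t}. (if h s \<in> leaves d r then 1 else 0 :: real)) = Lmass (t - 1) - Lmass (a - 1)"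
    using assms(2)
  proof (induction t rule: dec_induct)
    case base then show ?case by simp
  next
    case (step t)
    have e: "{a..<Suc t} = insert t {a..<t}" using step by auto
    have "Lmass t = Lmass (t - 1) + (if h t \<in> leaves d r then 1 else 0)"
      using Lmass_Suc[of "t - 1"] step assms by (simp add: Suc_diff_1)
    then show ?case unfolding e using step by simp
  qed
  also have "\<dots> \<le> Lmass t"
  proof -
    have "T0 \<le> t - 1" using assms by simp
    then have "Lmass (t - 1) \<le> Lmass t" by (rule Lmass_mono) simp
    then show ?thesis using Lmass_nonneg[of "a - 1"] by linarith
  qed
  finally show ?thesis .
qed

lemma T_ge_1: "T \<ge> 1" using T_ge_T0 tzero_ge_1[of d r z0] d2 z0pos by simp

lemma t_pos: "t \<ge> T \<Longrightarrow> real t > 0" using T_ge_1 by simp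

lemma Nint_lower: "t \<ge> T \<Longrightarrow> j \<in> J \<Longrightarrow> Nint j t \<ge> \<epsilon> * real t"
  using interior_lower[of t j] t_pos[of t] unfolding Nint_def Zr_def by (simp add: field_simps)

lemma Lmass_bound: assumes t: "t \<ge> T" shows "Lmass t \<le> real d * real t powr (1 - \<epsilon>)"
proof -
  have tp: "real t > 0" using t_pos t .
  have "Lmass t = (\<Sum>i\<in>J. \<Sum>k\<in>{1..r i}. Zr t (Inr (i,k)))" unfolding Lmass_def by (rule sum_leaves)
  also have "\<dots> \<le> (\<Sum>i\<in>J. real t * real t powr (- \<epsilon>))"
  proof (intro sum_mono)
    fix i assume i: "i \<in> J"
    have "(\<Sum>k\<in>{1..r i}. Zr t (Inr (i,k))) / real t \<le> real t powr (- \<epsilon>)"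
      using leaf_upper[OF t i] unfolding Zr_def .
    then show "(\<Sum>k\<in>{1..r i}. Zr t (Inr (i,k))) \<le> real t * real t powr (- \<epsilon>)"
      using tp by (simp add: divide_le_eq mult.commute)
  qed
  also have "\<dots> = real d * (real t * real t powr (- \<epsilon>))" by simp
  also have "real t * real t powr (- \<epsilon>) = real t powr (1 - \<epsilon>)"
  proof -
    have "real t powr (1 - \<epsilon>) = real t powr (1 + (- \<epsilon>))" by simp
    also have "\<dots> = real t powr 1 * real t powr (- \<epsilon>)" by (rule powr_add)
    finally show ?thesis using tp by simp
  qed
  finally show ?thesis .
qed

definition nbr_weight :: "nat \<Rightarrow> real" where
  "nbr_weight s = (\<Sum>y\<in>{y \<in> V. adj d r (h s) y}. Zr s y)"

lemma nbr_weight_bounds: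
  assumes s: "s \<ge> T0" and i: "i \<in> J" and hs: "h s = Inl i"
  shows "nbr_weight s \<le> real s - Nint i s" "(\<Sum>k\<in>J - {i}. Nint k s) \<le> nbr_weight s"
    and "(\<Sum>k\<in>J - {i}. Nint k s) = real s - Lmass s - Nint i s"
proof -
  let ?S = "{y \<in> V. adj d r (h s) y}"
  have "Inl i \<in> V" using i unfolding Vd_def by auto
  then have "(\<Sum>y\<in>V - {Inl i}. Zr s y) = real s - Nint i s"
    using sum_Zr[OF s] unfolding Nint_def by (simp add: finite_Vd sum_diff1)
  moreover have "?S \<subseteq> V - {Inl i}" using hs by (auto simp: adj_def)
  ultimately show "nbr_weight s \<le> real s - Nint i s"
    unfolding nbr_weight_def using Zr_nonneg finite_Vd sum_mono2[of "V - {Inl i}" ?S "Zr s"] by auto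
  have "Inl ` (J - {i}) \<subseteq> ?S" using hs i unfolding adj_def Vd_def by auto
  then have "(\<Sum>y\<in>Inl ` (J - {i}). Zr s y) \<le> nbr_weight s"
    unfolding nbr_weight_def using Zr_nonneg finite_Vd by (intro sum_mono2) auto
  moreover have "(\<Sum>k\<in>J - {i}. Nint k s) = (\<Sum>y\<in>Inl ` (J - {i}). Zr s y)"
    unfolding Nint_def by (subst sum.reindex) (auto simp: inj_on_def)
  ultimately show "(\<Sum>k\<in>J - {i}. Nint k s) \<le> nbr_weight s" by simp
  have "(\<Sum>k\<in>J - {i}. Nint k s) = (\<Sum>k\<in>J. Nint k s) - Nint i s" using i by (simp add: sum_diff1)
  then show "(\<Sum>k\<in>J - {i}. Nint k s) = real s - Lmass s - Nint i s" using Zr_split[OF s] by simp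
qed

text \<open>From an interior vertex \<open>i\<close>, the walk jumps to \<open>j \<noteq> i\<close> with probability \<open>N j / (s - N i)\<close>,
  up to an error \<open>L / (\<epsilon> s)\<close> caused by the leaves of \<open>i\<close>.\<close>
lemma trans_prob_interior:
  assumes s: "s \<ge> T" and i: "i \<in> J" and j: "j \<in> J" and ij: "i \<noteq> j" and hs: "h s = Inl i"
  shows "\<bar>trans_prob d r z0 h s (Inl j) - Nint j s / (real s - Nint i s)\<bar> \<le> Lmass s / (\<epsilon> * real s)"
proof -
  have sT0: "s \<ge> T0" using s T_ge_T0 by simp
  define Den where "Den = nbr_weight s"
  note bounds = nbr_weight_bounds[OF sT0 i hs, folded Den_def]
  have "adj d r (h s) (Inl j)" using hs i j ij unfolding adj_def by simp
  then have tpe: "trans_prob d r z0 h s (Inl j) = Nint j s / Den"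
    unfolding trans_prob_def Den_def nbr_weight_def Nint_def Zr_def by simp
  have Nj: "Nint j s \<le> (\<Sum>k\<in>J - {i}. Nint k s)"
    using j ij by (intro member_le_sum) (auto simp: Nint_def Zr_nonneg)
  have es: "\<epsilon> * real s > 0" using eps t_pos[OF s] by simp
  have Den_ge: "Den \<ge> \<epsilon> * real s" using Nint_lower[OF s j] Nj bounds(2) by linarith
  have gap: "0 \<le> (real s - Nint i s) - Den" "(real s - Nint i s) - Den \<le> Lmass s"
    using bounds by linarith+
  have pos: "Den > 0" "real s - Nint i s > 0" using Den_ge es bounds(1) by linarith+
  have Nj0: "Nint j s \<ge> 0" unfolding Nint_def by (simp add: Zr_nonneg)
  have "Nint j s / Den - Nint j s / (real s - Nint i s)
      = Nint j s * ((real s - Nint i s) - Den) / (Den * (real s - Nint i s))"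
    using pos by (simp add: field_simps)
  then have "\<bar>Nint j s / Den - Nint j s / (real s - Nint i s)\<bar>
      = Nint j s * ((real s - Nint i s) - Den) / (Den * (real s - Nint i s))"
    using Nj0 gap pos by (simp add: abs_of_nonneg)
  also have "\<dots> \<le> (real s - Nint i s) * Lmass s / (Den * (real s - Nint i s))"
    using Nj0 gap pos Nj bounds Lmass_nonneg by (intro divide_right_mono mult_mono) auto
  also have "\<dots> = Lmass s / Den" using pos by simp
  also have "\<dots> \<le> Lmass s / (\<epsilon> * real s)" using Lmass_nonneg Den_ge es by (intro divide_left_mono) auto
  finally show ?thesis unfolding tpe .
qed

lemma Nint_increment: "s > T0 \<Longrightarrow> Nint i s - Nint i (s-1) = (if h s = Inl i then 1 else 0)"
  using Nint_Suc[of "s-1" i] by simp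

lemma trans_prob_approx:
  assumes s: "s > T" and j: "j \<in> J"
  shows "\<bar>trans_prob d r z0 h s (Inl j) - (\<Sum>i\<in>J-{j}. (Nint i s - Nint i (s-1)) * (Nint j s / (real s - Nint i s)))\<bar>
     \<le> (if h s \<in> leaves d r then 1 else 0) + Lmass s / (\<epsilon> * real s)"
proof -
  have sT0: "s > T0" using s T_ge_T0 by simp
  have sT: "s \<ge> T" using s by simp
  have nonn: "Lmass s / (\<epsilon> * real s) \<ge> 0" using Lmass_nonneg eps by simp
  have hsV: "h s \<in> V" using path_in_Vd[of s] sT0 by simp
  have sumv: "(\<Sum>i\<in>J-{j}. (Nint i s - Nint i (s-1)) * (Nint j s / (real s - Nint i s)))
     = (\<Sum>i\<in>J-{j}. (if h s = Inl i then Nint j s / (real s - Nint i s) else 0))"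
    using Nint_increment[OF sT0] by (intro sum.cong) auto
  show ?thesis
  proof (cases "h s \<in> leaves d r")
    case True
    then have "\<forall>i. h s \<noteq> Inl i" unfolding leaves_def by auto
    then have "(\<Sum>i\<in>J-{j}. (Nint i s - Nint i (s-1)) * (Nint j s / (real s - Nint i s))) = 0"
      unfolding sumv by simp
    then show ?thesis using True trans_prob_nonneg[of d r z0 h s "Inl j"] trans_prob_le_1[of d r z0 h s "Inl j"] nonn by simp
  next
    case False
    then obtain i where i: "h s = Inl i" "i \<in> J" using hsV unfolding Vd_split by auto
    show ?thesis
    proof (cases "i = j")
      case True
      have "trans_prob d r z0 h s (Inl j) = 0" using i True by (intro trans_prob_eq_0) (simp add: adj_def)
      moreover have "(\<Sum>i\<in>J-{j}. (if h s = Inl i then Nint j s / (real s - Nint i s) else 0)) = 0"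
        using i True by (intro sum.neutral) auto
      ultimately show ?thesis using sumv nonn False by simp
    next
      case False
      have "(\<Sum>i'\<in>J-{j}. (if h s = Inl i' then Nint j s / (real s - Nint i' s) else 0)) = Nint j s / (real s - Nint i s)"
        using i False by (simp add: sum.delta' cong: if_cong)
      then show ?thesis using trans_prob_interior[OF sT i(2) j False i(1)] sumv \<open>h s \<notin> leaves d r\<close> by simp
    qed
  qed
qed

lemma Nint_diff: "T0 \<le> a \<Longrightarrow> a \<le> t \<Longrightarrow> Nint j t - Nint j a = (\<Sum>s\<in>{a..<t}. (if h (Suc s) = Inl j then 1 else 0))"
proof -
  assume a: "T0 \<le> a" "a \<le> t"
  show ?thesis using a(2)
  proof (induction t rule: dec_induct)
    case base then show ?case by simp
  next
    case (step t)
    have e: "{a..<Suc t} = insert t {a..<t}" using step by auto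
    show ?case unfolding e using step Nint_Suc[of t j] a by simp
  qed
qed

lemma Mart_diff: "T0 \<le> a \<Longrightarrow> a \<le> t \<Longrightarrow> Mart j t - Mart j a = (\<Sum>s\<in>{a..<t}. ((if h (Suc s) = Inl j then 1 else 0) - trans_prob d r z0 h s (Inl j)))"
proof -
  assume a: "T0 \<le> a" "a \<le> t"
  have "{T0..<t} = {T0..<a} \<union> {a..<t}" using a by auto
  then have "Mart j t = Mart j a + (\<Sum>s\<in>{a..<t}. ((if h (Suc s) = Inl j then 1 else 0) - trans_prob d r z0 h s (Inl j)))"
    unfolding Mart_def by (simp add: sum.union_disjoint ivl_disj_int_two(3))
  then show ?thesis by simp
qed

lemma Lmass_eq: assumes "t \<ge> T0" shows "real t - (\<Sum>j\<in>J. Nint j t) = Lmass t" using Zr_split[OF assms] by linarith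

lemma Nint_sum_increment: "t \<ge> T0 \<Longrightarrow> (\<Sum>j\<in>J. Nint j (Suc t)) - (\<Sum>j\<in>J. Nint j t) \<le> 1"
proof -
  assume t: "t \<ge> T0"
  have "(\<Sum>j\<in>J. Nint j (Suc t)) - (\<Sum>j\<in>J. Nint j t) = (\<Sum>j\<in>J. (if h (Suc t) = Inl j then 1 else 0))"
    using t by (simp add: Nint_Suc sum.distrib)
  also have "\<dots> \<le> 1"
  proof (cases "h (Suc t)")
    case (Inl j0)
    then show ?thesis by (simp add: sum.delta)
  next
    case (Inr b)
    then show ?thesis by simp
  qed
  finally show ?thesis .
qed

lemma drift_approx_path: assumes a: "T < a" "a \<le> t" and j: "j \<in> J"
  shows "\<bar>Nint j t - Nint j a - (\<Sum>s\<in>{a..<t}. \<Sum>i\<in>J-{j}. (Nint i s - Nint i (s-1)) * (Nint j s / (real s - Nint i s)))\<bar>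
       \<le> \<bar>Mart j t - Mart j a\<bar> + (real t - (\<Sum>j\<in>J. Nint j t)) + (\<Sum>s\<in>{a..<t}. (real s - (\<Sum>j\<in>J. Nint j s)) / (\<epsilon> * real s))"
proof -
  have aT0: "T0 \<le> a" "T0 < a" using a T_ge_T0 by auto
  define g where "g s = (\<Sum>i\<in>J-{j}. (Nint i s - Nint i (s-1)) * (Nint j s / (real s - Nint i s)))" for s
  define p where "p s = trans_prob d r z0 h s (Inl j)" for s
  have e1: "Nint j t - Nint j a - (\<Sum>s\<in>{a..<t}. g s) = (Mart j t - Mart j a) + (\<Sum>s\<in>{a..<t}. p s - g s)"
    unfolding Nint_diff[OF aT0(1) a(2)] Mart_diff[OF aT0(1) a(2)] p_def by (simp add: sum_subtractf)
  have "\<bar>\<Sum>s\<in>{a..<t}. p s - g s\<bar> \<le> (\<Sum>s\<in>{a..<t}. \<bar>p s - g s\<bar>)" by (rule sum_abs)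
  also have "\<dots> \<le> (\<Sum>s\<in>{a..<t}. (if h s \<in> leaves d r then 1 else 0) + Lmass s / (\<epsilon> * real s))"
    unfolding p_def g_def using trans_prob_approx j a by (intro sum_mono) auto
  also have "\<dots> = (\<Sum>s\<in>{a..<t}. (if h s \<in> leaves d r then 1 else 0)) + (\<Sum>s\<in>{a..<t}. Lmass s / (\<epsilon> * real s))"
    by (rule sum.distrib)
  also have "\<dots> \<le> Lmass t + (\<Sum>s\<in>{a..<t}. Lmass s / (\<epsilon> * real s))"
    using leaf_visits_le[OF aT0(2) a(2)] by simp
  finally have b: "\<bar>\<Sum>s\<in>{a..<t}. p s - g s\<bar> \<le> Lmass t + (\<Sum>s\<in>{a..<t}. Lmass s / (\<epsilon> * real s))" .
  have c1: "real t - (\<Sum>j\<in>J. Nint j t) = Lmass t" using Lmass_eq a aT0 by simp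
  have c2: "(\<Sum>s\<in>{a..<t}. (real s - (\<Sum>j\<in>J. Nint j s)) / (\<epsilon> * real s)) = (\<Sum>s\<in>{a..<t}. Lmass s / (\<epsilon> * real s))"
    using Lmass_eq aT0 by (intro sum.cong) auto
  show ?thesis unfolding c1 c2 g_def[symmetric] e1 using b by linarith
qed

lemma dynamics: "interior_dynamics d \<epsilon> T Nint Mart (real d)"
proof (unfold_locales)
  show "2 \<le> d" by (rule d2)
  show "0 < \<epsilon>" by (rule eps)
  show "1 \<le> T" by (rule T_ge_1)
  show "0 \<le> real d" by simp
  show "Nint j t \<ge> \<epsilon> * real t" if "T \<le> t" "j \<in> J" for t j using Nint_lower that .
  show "(\<Sum>j\<in>J. Nint j t) \<le> real t" if "T \<le> t" for t using Zr_split[of t] Lmass_nonneg[of t] that T_ge_T0 by simp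
  show "real t - (\<Sum>j\<in>J. Nint j t) \<le> real d * real t powr (1 - \<epsilon>)" if "T \<le> t" for t
    using Lmass_eq[of t] Lmass_bound[OF that] that T_ge_T0 by simp
  show "0 \<le> Nint j (Suc t) - Nint j t \<and> Nint j (Suc t) - Nint j t \<le> 1" if "T \<le> t" "j \<in> J" for t j
    using Nint_Suc[of t j] that T_ge_T0 by simp
  show "(\<Sum>j\<in>J. Nint j (Suc t)) - (\<Sum>j\<in>J. Nint j t) \<le> 1" if "T \<le> t" for t using Nint_sum_increment[of t] that T_ge_T0 by simp
  show "\<bar>Nint j t - Nint j a - (\<Sum>s\<in>{a..<t}. \<Sum>i\<in>J-{j}. (Nint i s - Nint i (s-1)) * (Nint j s / (real s - Nint i s)))\<bar>
       \<le> \<bar>Mart j t - Mart j a\<bar> + (real t - (\<Sum>j\<in>J. Nint j t)) + (\<Sum>s\<in>{a..<t}. (real s - (\<Sum>j\<in>J. Nint j s)) / (\<epsilon> * real s))"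
    if "T < a" "a \<le> t" "j \<in> J" for a t j using drift_approx_path that .
  show "(\<lambda>t. Mart j t / real t) \<longlonglongrightarrow> 0" if "j \<in> J" for j using mart_lln[OF that] unfolding Mart_def .
qed

lemma interior_tendsto: "j \<in> J \<Longrightarrow> (\<lambda>t. Zr t (Inl j) / real t) \<longlonglongrightarrow> 1 / real d"
  using interior_dynamics.frac_tendsto[OF dynamics] unfolding Nint_def by blast

lemma leaf_tendsto: assumes v: "v \<in> leaves d r" shows "(\<lambda>t. Zr t v / real t) \<longlonglongrightarrow> 0"
proof (rule tendsto_sandwich[of "\<lambda>_. 0" _ _ "\<lambda>t. interior_dynamics.leaf_mass d Nint t / real t"])
  show "eventually (\<lambda>t. 0 \<le> Zr t v / real t) sequentially" by (simp add: Zr_nonneg)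
  show "eventually (\<lambda>t. Zr t v / real t \<le> interior_dynamics.leaf_mass d Nint t / real t) sequentially"
    using eventually_ge_at_top[of T0]
  proof eventually_elim
    case (elim t)
    have "Zr t v \<le> Lmass t" unfolding Lmass_def using v finite_leaves by (intro member_le_sum) (auto simp: Zr_nonneg)
    also have "Lmass t = interior_dynamics.leaf_mass d Nint t" using Lmass_eq[OF elim] unfolding interior_dynamics.leaf_mass_def[OF dynamics] by simp
    finally show ?case by (intro divide_right_mono) auto
  qed
  show "(\<lambda>_. 0) \<longlonglongrightarrow> (0::real)" by simp
  show "(\<lambda>t. interior_dynamics.leaf_mass d Nint t / real t) \<longlonglongrightarrow> 0" by (rule interior_dynamics.leaf_mass_frac_tendsto[OF dynamics])
qed

end

lemma C_eps_occupation_limit: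
  assumes d2: "d \<ge> 2" and z0pos: "\<forall>v\<in>Vd d r. z0 v > 0" and eps: "\<epsilon> > 0"
    and path: "\<forall>s\<ge>tzero d r z0. X s \<omega> \<in> Vd d r"
    and mart: "\<forall>j. (\<lambda>t. (\<Sum>s\<in>{tzero d r z0..<t}. (if X (Suc s) \<omega> = Inl j then 1 else 0)
                  - trans_prob d r z0 (\<lambda>s. X s \<omega>) s (Inl j)) / real t) \<longlonglongrightarrow> 0"
    and C: "C_eps d r z0 X \<epsilon> \<omega>"
  shows "\<forall>v\<in>Vd d r. pi_inf d r z0 X \<omega> v = pi_unif d v"
proof -
  from C obtain T where T: "T \<ge> tzero d r z0" "\<And>t. t \<ge> T \<Longrightarrow> A_eps d r z0 X \<epsilon> t \<omega>"
    unfolding C_eps_def by blast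
  have fin: "finite {1..d}" "{1..d} \<noteq> {}" using d2 by auto
  interpret p: vrrw_path d r z0 "\<lambda>s. X s \<omega>" \<epsilon> T
  proof
    show "\<epsilon> \<le> real (Zp d r z0 (\<lambda>s. X s \<omega>) t (Inl i)) / real t" if "T \<le> t" "i \<in> {1..d}" for t i
      using T(2)[OF that(1)] fin that(2) Min_le[of _ "Z d r z0 X t \<omega> (Inl i) / real t"]
      unfolding A_eps_def Z_def by force
    show "(\<Sum>k\<in>{1..r i}. real (Zp d r z0 (\<lambda>s. X s \<omega>) t (Inr (i, k)))) / real t \<le> real t powr - \<epsilon>"
      if "T \<le> t" "i \<in> {1..d}" for t i
      using T(2)[OF that(1)] fin that(2)
        Max_ge[of _ "(\<Sum>k\<in>{1..r i}. Z d r z0 X t \<omega> (Inr (i, k))) / real t"]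
      unfolding A_eps_def Z_def by force
  qed (use d2 z0pos eps path mart T(1) in auto)
  have pi_t: "pi_t d r z0 X t \<omega> v = p.Zr t v / real t" for t v
    unfolding pi_t_def Z_def p.Zr_def by simp
  have conv: "(\<lambda>t. pi_t d r z0 X t \<omega> v) \<longlonglongrightarrow> pi_unif d v" if v: "v \<in> Vd d r" for v
  proof -
    from v consider (interior) i where "v = Inl i" "i \<in> {1..d}" | (leaf) "v \<in> leaves d r"
      unfolding Vd_split by auto
    then show ?thesis
    proof cases
      case interior
      then show ?thesis unfolding pi_t pi_unif_def using p.interior_tendsto[of i] by simp
    next
      case leaf
      then obtain i k where "v = Inr (i,k)" unfolding leaves_def by auto
      then show ?thesis unfolding pi_t pi_unif_def using p.leaf_tendsto[OF leaf] by simp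
    qed
  qed
  then have "\<forall>v\<in>Vd d r. convergent (\<lambda>t. pi_t d r z0 X t \<omega> v)" using convergentI by blast
  then show ?thesis unfolding pi_inf_def using conv limI by auto
qed

theorem mainTheorem10:
  fixes M :: "'a measure" and X :: "nat \<Rightarrow> 'a \<Rightarrow> vtx"
    and d :: nat and r :: "nat \<Rightarrow> nat" and z0 :: "vtx \<Rightarrow> nat" and x0 :: vtx and \<epsilon> :: real
  assumes "d \<ge> 3"
    and "\<forall>v\<in>Vd d r. z0 v > 0"
    and "x0 \<in> Vd d r"
    and "is_vrrw M X d r z0 x0"
    and "\<epsilon> > 0"
  shows "AE \<omega> in M. C_eps d r z0 X \<epsilon> \<omega> \<longrightarrow> (\<forall>v\<in>Vd d r. pi_inf d r z0 X \<omega> v = pi_unif d v)"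
proof -
  have d2: "d \<ge> 2" using assms(1) by simp
  interpret vrrw M X d r z0 x0 using d2 assms(2,3,4) by unfold_locales auto
  have "AE \<omega> in M. (\<forall>s\<ge>T0. X s \<omega> \<in> V) \<and> (\<forall>j. (\<lambda>t. comp_visits j t (\<lambda>s. X s \<omega>) / real t) \<longlonglongrightarrow> 0)"
    using AE_path_in_Vd AE_comp_visits_lln by eventually_elim auto
  then show ?thesis
  proof (rule eventually_mono, intro impI)
    fix \<omega> assume "(\<forall>s\<ge>T0. X s \<omega> \<in> V) \<and> (\<forall>j. (\<lambda>t. comp_visits j t (\<lambda>s. X s \<omega>) / real t) \<longlonglongrightarrow> 0)"
      and "C_eps d r z0 X \<epsilon> \<omega>"
    then show "\<forall>v\<in>V. pi_inf d r z0 X \<omega> v = pi_unif d v"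
      using C_eps_occupation_limit[OF d2 assms(2,5), of X \<omega>] unfolding comp_visits_def by blast
  qed
qed

end
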